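(* Assume that $\mathcal{G}_{\log}\neq\emptyset$, that $\mathcal{X}\cap\Omega_{\log}$ is compact, that the initial point $\mathbf{x}_0\in\mathcal{X}$ satisfies $g_\ell(\mathbf{x}_0)<0$ for all $\ell\in\mathcal{G}_{\log}$, and that the poll directions $\{\mathcal{D}_k\}$ of Algorithm LOG-DS satisfy the Poll Direction Assumption. Let $\{\mathbf{x}_k\},\{\rho_k\}$ be generated by Algorithm LOG-DS, let $\mathcal{K}_\rho=\{k\in\mathbb{N}\mid\rho_{k+1}<\rho_k\}$, and let $\mathcal{K}_\rho^{\mathbf{x}}\subseteq\mathcal{K}_\rho$ be an infinite index set such that $\mathbf{x}_k\to\mathbf{x}^*$ as $k\to+\infty$, $k\in\mathcal{K}_\rho^{\mathbf{x}}$, where $\mathbf{x}^*$ satisfies the MFCQ. Define $$\lambda_\ell(\mathbf{x};\rho)=\begin{cases}\dfrac{\rho}{-g_\ell(\mathbf{x})},&\ell\in\mathcal{G}_{\log},\\[2mm]\nu\left(\dfrac{\max\{g_\ell(\mathbf{x}),0\}}{\rho}\right)^{\nu-1},&\ell\in\mathcal{G}_{\rm ext},\end{cases}\qquad \mu_j(\mathbf{x};\rho)=\nu\left(\frac{|h_j(\mathbf{x})|}{\rho}\right)^{\nu-1}.$$ Then the sequences $\{\lambda_\ell(\mathbf{x}_k;\rho_k)\}_{k\in\mathcal{K}_\rho^{\mathbf{x}}}$, $\ell=1,\dots,m$, and $\{\mu_j(\mathbf{x}_k;\rho_k)\}_{k\in\mathcal{K}_\rho^{\mathbf{x}}}$,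 $j=1,\dots,p$, are bounded.
   Context: Problem (P): minimize $f(\mathbf{x})$ subject to $g_\ell(\mathbf{x})\le 0$ ($\ell=1,\dots,m$), $h_j(\mathbf{x})=0$ ($j=1,\dots,p$), $\mathbf{x}\in\mathcal{X}$, where $\mathcal{X}=\{\mathbf{x}\in\mathbb{R}^n\mid \mathbf{A}\mathbf{x}\le\mathbf{b}\}$ with $\mathbf{A}\in\mathbb{R}^{q\times n}$ (rows $\mathbf{a}_i^\top$), $\mathbf{b}\in\mathbb{R}^q$, and $f,g_\ell,h_j$ are real-valued and continuously differentiable on an open set containing $\mathcal{X}$. Given an initial point $\mathbf{x}_0$, set $\mathcal{G}_{\log}=\{\ell\in\{1,\dots,m\}\mid g_\ell(\mathbf{x}_0)<0\}$, $\mathcal{G}_{\rm ext}=\{\ell\in\{1,\dots,m\}\mid g_\ell(\mathbf{x}_0)\ge 0\}$, and $\Omega_{\log}=\{\mathbf{x}\in\mathbb{R}^n\mid g_\ell(\mathbf{x})\le 0,\ \ell\in\mathcal{G}_{\log}\}$. For $\rho>0$ and $\nu\in(1,2]$ the merit function is $$Z(\mathbf{x};\rho)=f(\mathbf{x})-\rho\sum_{\ell\in\mathcal{G}_{\log}}\log(-g_\ell(\mathbf{x}))+\frac{1}{\rho^{\nu-1}}\sum_{\ell\in\mathcal{G}_{\rm ext}}(\max\{g_\ell(\mathbf{x}),0\})^\nu+\frac{1}{\rho^{\nu-1}}\sum_{j=1}^p|h_j(\mathbf{x})|^\nu$$ if $\mathbf{x}\in\mathcal{X}$ and $g_\ell(\mathbf{x})<0$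 for all $\ell\in\mathcal{G}_{\log}$, and $Z(\mathbf{x};\rho)=+\infty$ otherwise. A forcing function is a continuous nondecreasing $\xi:[0,+\infty)\to[0,+\infty)$ with $\xi(t)/t\to0$ as $t\downarrow0$ and such that $\xi(t_k)\to0$ implies $t_k\to0$. Algorithm LOG-DS. Data: $\mathbf{x}_0\in\mathcal{X}$ with $g_\ell(\mathbf{x}_0)<0$ for $\ell\in\mathcal{G}_{\log}$; a collection $\mathcal{D}$ of finite sets of unit vectors in $\mathbb{R}^n$; $\alpha_0>0$; $\rho_0>0$; $\nu\in(1,2]$; $\theta_\alpha,\theta_\rho\in(0,1)$; $\phi\ge1$; $\beta>1$; a forcing function $\xi$. At each iteration $k=0,1,2,\dots$: (Search, optional) if some $\mathbf{z}_k\in\mathcal{X}$ with $Z(\mathbf{z}_k;\rho_k)\le Z(\mathbf{x}_k;\rho_k)-\xi(\alpha_k)$ is found, set $\mathbf{x}_{k+1}=\mathbf{z}_k$, $\alpha_{k+1}=\phi\alpha_k$, $\rho_{k+1}=\rho_k$ (successful iteration) and go to iteration $k+1$. Otherwise (Poll) select $\mathcal{D}_k\in\mathcal{D}$; if some $\mathbf{d}\in\mathcal{D}_k$ satisfies $\mathbf{x}_k+\alpha_k\mathbf{d}\in\mathcal{X}$ and $Z(\mathbf{x}_k+\alpha_k\mathbf{d};\rho_k)\le Z(\mathbf{x}_k;\rho_k)-\xi(\alpha_k)$, set $\mathbf{x}_{k+1}=\mathbf{x}_k+\alpha_k\mathbf{d}$, $\alpha_{k+1}=\phi\alpha_k$,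 $\rho_{k+1}=\rho_k$ (successful iteration). Otherwise the iteration is unsuccessful: set $\mathbf{x}_{k+1}=\mathbf{x}_k$, $\alpha_{k+1}=\theta_\alpha\alpha_k$, and (Penalty-barrier update) with $(g_{\min})_k=\min_{\ell\in\mathcal{G}_{\log}}|g_\ell(\mathbf{x}_k)|$, set $\rho_{k+1}=\theta_\rho\rho_k$ if $\alpha_{k+1}\le\min\{\rho_k^\beta,(g_{\min})_k^2\}$, and $\rho_{k+1}=\rho_k$ otherwise. Active sets and cones: for $\mathbf{x}\in\mathcal{X}$, $\mathcal{I}_\mathcal{X}(\mathbf{x})=\{i\mid \mathbf{a}_i^\top\mathbf{x}=b_i\}$ and $\mathcal{T}_\mathcal{X}(\mathbf{x})=\{\mathbf{d}\mid\mathbf{a}_i^\top\mathbf{d}\le0,\ i\in\mathcal{I}_\mathcal{X}(\mathbf{x})\}$; for $\varepsilon>0$, $\mathcal{I}_\mathcal{X}(\mathbf{x},\varepsilon)=\{i\mid\mathbf{a}_i^\top\mathbf{x}\ge b_i-\varepsilon\}$ and $\mathcal{T}_\mathcal{X}(\mathbf{x},\varepsilon)=\{\mathbf{d}\mid\mathbf{a}_i^\top\mathbf{d}\le0,\ i\in\mathcal{I}_\mathcal{X}(\mathbf{x},\varepsilon)\}$. Poll Direction Assumption: each $\mathcal{D}_k$ consists of vectors of Euclidean norm $1$; there is $\bar\varepsilon>0$ such that for every $k$ and every $\varepsilon\in(0,\bar\varepsilon]$, $\operatorname{cone}(\mathcal{D}_k\cap\mathcal{T}_\mathcal{X}(\mathbf{x}_k,\varepsilon))=\mathcal{T}_\mathcal{X}(\mathbf{x}_k,\varepsilon)$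 (cone = set of nonnegative linear combinations); and $\bigcup_k\mathcal{D}_k$ is a finite set. MFCQ at $\mathbf{x}\in\mathcal{X}$: (a) there is no nonzero $(\alpha_1,\dots,\alpha_p)$ with $(\sum_{i=1}^p\alpha_i\nabla h_i(\mathbf{x}))^\top\mathbf{d}\ge0$ for all $\mathbf{d}\in\mathcal{T}_\mathcal{X}(\mathbf{x})$; and (b) there exists $\mathbf{d}\in\mathcal{T}_\mathcal{X}(\mathbf{x})$ with $\nabla g_\ell(\mathbf{x})^\top\mathbf{d}<0$ for all $\ell\in\mathcal{I}_+(\mathbf{x})=\{\ell\mid g_\ell(\mathbf{x})\ge0\}$ and $\nabla h_j(\mathbf{x})^\top\mathbf{d}=0$ for all $j=1,\dots,p$. *)

theory Defs
  imports "HOL-Analysis.Analysis"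
begin

definition polyX :: "(nat \<Rightarrow> 'a::euclidean_space) \<Rightarrow> (nat \<Rightarrow> real) \<Rightarrow> nat \<Rightarrow> 'a set" where
  "polyX a b q = {x. \<forall>i\<in>{1..q}. a i \<bullet> x \<le> b i}"

definition tcone :: "(nat \<Rightarrow> 'a::euclidean_space) \<Rightarrow> (nat \<Rightarrow> real) \<Rightarrow> nat \<Rightarrow> 'a \<Rightarrow> 'a set" where
  "tcone a b q x = {d. \<forall>i\<in>{1..q}. a i \<bullet> x = b i \<longrightarrow> a i \<bullet> d \<le> 0}"

definition tcone_eps :: "(nat \<Rightarrow> 'a::euclidean_space) \<Rightarrow> (nat \<Rightarrow> real) \<Rightarrow> nat \<Rightarrow> 'a \<Rightarrow> real \<Rightarrow> 'a set" where
  "tcone_eps a b q x eps = {d. \<forall>i\<in>{1..q}. a i \<bullet> x \<ge> b i - eps \<longrightarrow> a i \<bullet> d \<le> 0}"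

definition nonneg_comb :: "'a::real_vector set \<Rightarrow> 'a set" where
  "nonneg_comb S = {y. \<exists>c. (\<forall>d\<in>S. c d \<ge> 0) \<and> y = (\<Sum>d\<in>S. c d *\<^sub>R d)}"

definition C1_grad :: "'a set \<Rightarrow> ('a::euclidean_space \<Rightarrow> real) \<Rightarrow> ('a \<Rightarrow> 'a) \<Rightarrow> bool" where
  "C1_grad U F dF \<longleftrightarrow> (\<forall>x\<in>U. (F has_derivative (\<lambda>d. dF x \<bullet> d)) (at x)) \<and> continuous_on U dF"

definition Glog :: "(nat \<Rightarrow> 'a \<Rightarrow> real) \<Rightarrow> nat \<Rightarrow> 'a \<Rightarrow> nat set" where
  "Glog g m x0 = {l\<in>{1..m}. g l x0 < 0}"

definition Gext :: "(nat \<Rightarrow> 'a \<Rightarrow> real) \<Rightarrow> nat \<Rightarrow> 'a \<Rightarrow> nat set" where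
  "Gext g m x0 = {l\<in>{1..m}. g l x0 \<ge> 0}"

definition Omega_log :: "(nat \<Rightarrow> 'a \<Rightarrow> real) \<Rightarrow> nat \<Rightarrow> 'a \<Rightarrow> 'a set" where
  "Omega_log g m x0 = {x. \<forall>l\<in>Glog g m x0. g l x \<le> 0}"

definition meritZ :: "('a::euclidean_space \<Rightarrow> real) \<Rightarrow> (nat \<Rightarrow> 'a \<Rightarrow> real) \<Rightarrow> (nat \<Rightarrow> 'a \<Rightarrow> real)
    \<Rightarrow> nat \<Rightarrow> nat \<Rightarrow> 'a set \<Rightarrow> 'a \<Rightarrow> real \<Rightarrow> real \<Rightarrow> 'a \<Rightarrow> ereal" where
  "meritZ f g h m p X x0 \<nu> \<rho> x =
     (if x \<in> X \<and> (\<forall>l\<in>Glog g m x0. g l x < 0) then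
        ereal (f x - \<rho> * (\<Sum>l\<in>Glog g m x0. ln (- g l x))
               + (1 / \<rho> powr (\<nu> - 1)) * (\<Sum>l\<in>Gext g m x0. (max (g l x) 0) powr \<nu>)
               + (1 / \<rho> powr (\<nu> - 1)) * (\<Sum>j\<in>{1..p}. \<bar>h j x\<bar> powr \<nu>))
      else \<infinity>)"

definition forcing :: "(real \<Rightarrow> real) \<Rightarrow> bool" where
  "forcing \<xi> \<longleftrightarrow> continuous_on {0..} \<xi> \<and> mono_on {0..} \<xi> \<and> (\<forall>t\<ge>0. \<xi> t \<ge> 0)
     \<and> ((\<lambda>t. \<xi> t / t) \<longlongrightarrow> 0) (at_right 0)
     \<and> (\<forall>tk :: nat \<Rightarrow> real. (\<forall>k. tk k \<ge> 0) \<longrightarrow> (\<lambda>k. \<xi> (tk k)) \<longlonglongrightarrow> 0 \<longrightarrow> tk \<longlonglongrightarrow> 0)"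

definition poll_dir_assumption :: "(nat \<Rightarrow> 'a::euclidean_space) \<Rightarrow> (nat \<Rightarrow> real) \<Rightarrow> nat
    \<Rightarrow> (nat \<Rightarrow> 'a set) \<Rightarrow> (nat \<Rightarrow> 'a) \<Rightarrow> bool" where
  "poll_dir_assumption a b q D xs \<longleftrightarrow>
     (\<forall>k. \<forall>d\<in>D k. norm d = 1)
     \<and> (\<exists>epsb>0. \<forall>k. \<forall>eps. 0 < eps \<and> eps \<le> epsb \<longrightarrow>
            nonneg_comb (D k \<inter> tcone_eps a b q (xs k) eps) = tcone_eps a b q (xs k) eps)
     \<and> finite (\<Union>k. D k)"

text \<open>A successful iteration (search or poll step) moves to any point of X with sufficient decrease;
  an unsuccessful iteration is only allowed when no poll point gives sufficient decrease.\<close>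
definition logds_run :: "('a::euclidean_space \<Rightarrow> real) \<Rightarrow> (nat \<Rightarrow> 'a \<Rightarrow> real) \<Rightarrow> (nat \<Rightarrow> 'a \<Rightarrow> real)
    \<Rightarrow> nat \<Rightarrow> nat \<Rightarrow> 'a set \<Rightarrow> 'a \<Rightarrow> real \<Rightarrow> real \<Rightarrow> real \<Rightarrow> real \<Rightarrow> real \<Rightarrow> real \<Rightarrow> real
    \<Rightarrow> (real \<Rightarrow> real) \<Rightarrow> (nat \<Rightarrow> 'a set) \<Rightarrow> (nat \<Rightarrow> 'a) \<Rightarrow> (nat \<Rightarrow> real) \<Rightarrow> (nat \<Rightarrow> real) \<Rightarrow> bool" where
  "logds_run f g h m p X x0 \<alpha>0 \<rho>0 \<nu> \<theta>\<alpha> \<theta>\<rho> \<phi> \<beta> \<xi> D xs \<alpha> \<rho> \<longleftrightarrow>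
     xs 0 = x0 \<and> \<alpha> 0 = \<alpha>0 \<and> \<rho> 0 = \<rho>0 \<and>
     (\<forall>k. let Z = meritZ f g h m p X x0 \<nu> (\<rho> k) in
        (xs (Suc k) \<in> X \<and> Z (xs (Suc k)) \<le> Z (xs k) - ereal (\<xi> (\<alpha> k))
          \<and> \<alpha> (Suc k) = \<phi> * \<alpha> k \<and> \<rho> (Suc k) = \<rho> k)
        \<or>
        ((\<forall>d\<in>D k. xs k + \<alpha> k *\<^sub>R d \<in> X \<longrightarrow>
             \<not> (Z (xs k + \<alpha> k *\<^sub>R d) \<le> Z (xs k) - ereal (\<xi> (\<alpha> k))))
          \<and> xs (Suc k) = xs k \<and> \<alpha> (Suc k) = \<theta>\<alpha> * \<alpha> k
          \<and> \<rho> (Suc k) = (if \<alpha> (Suc k) \<le> min (\<rho> k powr \<beta>)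
                                 ((Min ((\<lambda>l. \<bar>g l (xs k)\<bar>) ` Glog g m x0))\<^sup>2)
                          then \<theta>\<rho> * \<rho> k else \<rho> k)))"

definition MFCQ :: "(nat \<Rightarrow> 'a::euclidean_space) \<Rightarrow> (nat \<Rightarrow> real) \<Rightarrow> nat
    \<Rightarrow> (nat \<Rightarrow> 'a \<Rightarrow> real) \<Rightarrow> (nat \<Rightarrow> 'a \<Rightarrow> 'a) \<Rightarrow> (nat \<Rightarrow> 'a \<Rightarrow> 'a) \<Rightarrow> nat \<Rightarrow> nat \<Rightarrow> 'a \<Rightarrow> bool" where
  "MFCQ a b q g dg dh m p x \<longleftrightarrow>
     \<not> (\<exists>c :: nat \<Rightarrow> real. (\<exists>i\<in>{1..p}. c i \<noteq> 0) \<and>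
          (\<forall>d\<in>tcone a b q x. (\<Sum>i\<in>{1..p}. c i *\<^sub>R dh i x) \<bullet> d \<ge> 0))
     \<and> (\<exists>d\<in>tcone a b q x. (\<forall>l\<in>{1..m}. g l x \<ge> 0 \<longrightarrow> dg l x \<bullet> d < 0)
                            \<and> (\<forall>j\<in>{1..p}. dh j x \<bullet> d = 0))"

definition lam :: "(nat \<Rightarrow> 'a \<Rightarrow> real) \<Rightarrow> nat \<Rightarrow> 'a \<Rightarrow> real \<Rightarrow> nat \<Rightarrow> 'a \<Rightarrow> real \<Rightarrow> real" where
  "lam g m x0 \<nu> l x \<rho> =
     (if l \<in> Glog g m x0 then \<rho> / (- g l x)
      else \<nu> * (max (g l x) 0 / \<rho>) powr (\<nu> - 1))"

definition mu :: "(nat \<Rightarrow> 'a \<Rightarrow> real) \<Rightarrow> real \<Rightarrow> nat \<Rightarrow> 'a \<Rightarrow> real \<Rightarrow> real" where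
  "mu h \<nu> j x \<rho> = \<nu> * (\<bar>h j x\<bar> / \<rho>) powr (\<nu> - 1)"

end

theory Submission
  imports Defs
begin

text \<open>At an iteration in \<open>K\<close> every poll step failed to decrease the merit function
  sufficiently. Because the forcing function is \<open>o(\<alpha>)\<close> and the update rule forces
  \<open>\<theta>\<alpha> \<alpha>\<^sub>k \<le> \<rho>\<^sub>k\<^sup>\<beta>\<close> and \<open>\<theta>\<alpha> \<alpha>\<^sub>k \<le> (g\<^sub>m\<^sub>i\<^sub>n)\<^sup>2\<close>, a first-order expansion of the barrier and
  penalty terms along a poll direction \<open>e\<close> turns this failure into
  \<open>\<langle>V\<^sub>k, e\<rangle> \<ge> - B - 2 \<epsilon> S\<^sub>k\<close>, where \<open>V\<^sub>k = \<Sum> \<lambda>\<^sub>l \<nabla>g\<^sub>l(x*) + \<Sum> sgn(h\<^sub>j) \<mu>\<^sub>j \<nabla>h\<^sub>j(x*)\<close>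
  and \<open>S\<^sub>k = 1 + \<Sum> \<lambda>\<^sub>l + \<Sum> \<mu>\<^sub>j\<close>. Near \<open>x*\<close> the poll directions in the tangent cone \<open>T\<close> of
  \<open>X\<close> at \<open>x*\<close> generate \<open>T\<close>, so the bound extends to all of \<open>T\<close>. Testing it with the direction
  from part (b) of the MFCQ bounds the multipliers of the active inequality constraints, and a
  compactness form of part (a) bounds the equality multipliers. Together they give
  \<open>S\<^sub>k \<le> c + S\<^sub>k / 2\<close> for large \<open>k \<in> K\<close>.\<close>

section \<open>Elementary inequalities\<close>

lemma log_barrier_increment_le:
  fixes a b \<rho> :: real
  assumes "a < 0" "b < 0" "\<rho> > 0"
  shows "- \<rho> * ln (- b) + \<rho> * ln (- a) \<le> \<rho> / (- b) * (b - a)"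
proof -
  have "ln (-a) - ln (-b) = ln (a / b)" using ln_div[of "-a" "-b"] assms by simp
  also have "\<dots> \<le> a / b - 1" using assms by (intro ln_le_minus_one) (simp add: divide_neg_neg)
  also have "\<dots> = (b - a) / (- b)" using assms by (simp add: field_simps)
  finally have "ln (-a) - ln (-b) \<le> (b - a) / (- b)" .
  then have "\<rho> * (ln (-a) - ln (-b)) \<le> \<rho> * ((b - a) / (- b))"
    using assms by (intro mult_left_mono) auto
  then show ?thesis by (simp add: algebra_simps)
qed

lemma powr_increment_le:
  fixes u v \<nu> :: real
  assumes "u \<ge> 0" "v \<ge> 0" "\<nu> > 1"
  shows "v powr \<nu> - u powr \<nu> \<le> \<nu> * v powr (\<nu> - 1) * (v - u)"
proof (cases "u = 0 \<or> v = 0")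
  case True
  then show ?thesis
  proof
    assume u: "u = 0"
    have "v powr \<nu> = v powr (\<nu> - 1) * v" using assms by (cases "v = 0") (simp_all add: powr_diff)
    moreover have "0 \<le> v powr (\<nu> - 1) * v" using assms by simp
    ultimately show ?thesis
      using u assms mult_right_mono[of 1 \<nu> "v powr (\<nu> - 1) * v"] by (simp add: mult.assoc)
  qed (use assms in simp)
next
  case False
  then have uv: "u > 0" "v > 0" using assms by auto
  have "((\<lambda>x. x powr \<nu>) has_field_derivative \<nu> * v powr (\<nu> - 1)) (at v within {0<..})"
    using uv by (auto intro!: derivative_eq_intros)
  then have "u powr \<nu> - v powr \<nu> \<ge> \<nu> * v powr (\<nu> - 1) * (u - v)"
    by (intro convex_on_imp_above_tangent[OF powr_convex])
       (use assms uv interior_open[OF open_greaterThan] in auto)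
  then show ?thesis by (simp add: algebra_simps)
qed

lemma powr_le_one_plus:
  fixes t r :: real
  assumes "t \<ge> 0" "0 < r" "r \<le> 1"
  shows "t powr r \<le> 1 + t"
proof (cases "t \<le> 1")
  case True
  then show ?thesis using assms powr_le1[of r t] by simp
next
  case False
  then have "t powr r \<le> t powr 1" using assms by (intro powr_mono) auto
  then show ?thesis using False by simp
qed

lemma powr_add_le_add_powr:
  fixes u v r :: real
  assumes "u \<ge> 0" "v \<ge> 0" "0 < r" "r \<le> 1"
  shows "(u + v) powr r \<le> u powr r + v powr r"
proof (cases "u + v = 0")
  case True then show ?thesis using assms by simp
next
  case False
  define s where "s = u + v"
  have s: "s > 0" using False assms s_def by simp
  have "1 = u / s + v / s" using s unfolding s_def by (simp add: add_divide_distrib[symmetric])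
  also have "\<dots> \<le> (u / s) powr r + (v / s) powr r"
    using powr_mono'[of r 1 "u/s"] powr_mono'[of r 1 "v/s"] assms s s_def by (intro add_mono) simp_all
  also have "\<dots> = (u powr r + v powr r) / s powr r"
    using assms s by (simp add: powr_divide add_divide_distrib)
  finally show ?thesis using s unfolding s_def[symmetric] by (simp add: field_simps)
qed

lemma abs_powr_diff_le:
  fixes u v r :: real
  assumes "u \<ge> 0" "v \<ge> 0" "0 < r" "r \<le> 1"
  shows "\<bar>u powr r - v powr r\<bar> \<le> \<bar>u - v\<bar> powr r"
proof -
  have *: "\<bar>x powr r - y powr r\<bar> \<le> \<bar>x - y\<bar> powr r" if "0 \<le> y" "y \<le> x" for x y
  proof -
    have "x powr r = (y + (x - y)) powr r" by simp
    also have "\<dots> \<le> y powr r + (x - y) powr r" using that assms by (intro powr_add_le_add_powr) auto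
    finally have "x powr r - y powr r \<le> (x - y) powr r" by simp
    moreover have "y powr r \<le> x powr r" using that assms by (intro powr_mono2) auto
    ultimately show ?thesis using that by simp
  qed
  show ?thesis
    using *[of v u] *[of u v] assms by (cases "v \<le> u") (auto simp: abs_minus_commute)
qed

lemma abs_sgn_mult_powr_diff_le:
  fixes a b r :: real
  assumes "0 < r" "r \<le> 1"
  shows "\<bar>sgn b * \<bar>b\<bar> powr r - sgn a * \<bar>a\<bar> powr r\<bar> \<le> 2 * \<bar>b - a\<bar> powr r"
proof -
  have holder: "\<bar>u powr r - v powr r\<bar> \<le> \<bar>u - v\<bar> powr r" if "u \<ge> 0" "v \<ge> 0" for u v
    using abs_powr_diff_le[OF that assms] .
  have mono: "u powr r \<le> \<bar>b - a\<bar> powr r" if "0 \<le> u" "u \<le> \<bar>b - a\<bar>" for u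
    using that assms by (intro powr_mono2) auto
  have nn: "0 \<le> \<bar>b - a\<bar> powr r" by simp
  consider "a \<ge> 0" "b \<ge> 0" | "a \<le> 0" "b \<le> 0" | "a < 0" "b > 0" | "a > 0" "b < 0" by linarith
  then show ?thesis
  proof cases
    case 1
    then show ?thesis using holder[of b a] nn by (cases "a = 0"; cases "b = 0") auto
  next
    case 2
    then show ?thesis using holder[of "-b" "-a"] nn by (cases "a = 0"; cases "b = 0") (auto simp: abs_minus_commute)
  next
    case 3
    then have "sgn b * \<bar>b\<bar> powr r = b powr r" "sgn a * \<bar>a\<bar> powr r = - ((- a) powr r)" by auto
    then show ?thesis
      unfolding abs_le_iff using 3 mono[of b] mono[of "-a"] powr_ge_zero[of b r] powr_ge_zero[of "-a" r]
      by linarith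
  next
    case 4
    then have "sgn b * \<bar>b\<bar> powr r = - ((- b) powr r)" "sgn a * \<bar>a\<bar> powr r = a powr r" by auto
    then show ?thesis
      unfolding abs_le_iff using 4 mono[of a] mono[of "-b"] powr_ge_zero[of a r] powr_ge_zero[of "-b" r]
      by linarith
  qed
qed

lemma abs_scaled_powr_diff_le:
  fixes u v r \<rho> C :: real
  assumes "u \<ge> 0" "v \<ge> 0" "0 < r" "r \<le> 1" "\<rho> > 0" "\<bar>u - v\<bar> \<le> C * \<rho>"
  shows "\<bar>(u / \<rho>) powr r - (v / \<rho>) powr r\<bar> \<le> 1 + C"
proof -
  have "\<bar>(u / \<rho>) powr r - (v / \<rho>) powr r\<bar> \<le> \<bar>u / \<rho> - v / \<rho>\<bar> powr r"
    using assms by (intro abs_powr_diff_le) auto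
  also have "\<dots> \<le> 1 + \<bar>u / \<rho> - v / \<rho>\<bar>" using assms by (intro powr_le_one_plus) auto
  also have "\<bar>u / \<rho> - v / \<rho>\<bar> = \<bar>u - v\<bar> / \<rho>" using assms by (simp add: diff_divide_distrib[symmetric])
  also have "\<dots> \<le> C" using assms by (simp add: divide_le_eq)
  finally show ?thesis by simp
qed

lemma abs_scaled_sgn_powr_diff_le:
  fixes u v r \<rho> C :: real
  assumes "0 < r" "r \<le> 1" "\<rho> > 0" "\<bar>u - v\<bar> \<le> C * \<rho>"
  shows "\<bar>sgn u * (\<bar>u\<bar> / \<rho>) powr r - sgn v * (\<bar>v\<bar> / \<rho>) powr r\<bar> \<le> 2 * (1 + C)"
proof -
  have "\<bar>sgn u * (\<bar>u\<bar> / \<rho>) powr r - sgn v * (\<bar>v\<bar> / \<rho>) powr r\<bar>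
      = \<bar>sgn u * \<bar>u\<bar> powr r - sgn v * \<bar>v\<bar> powr r\<bar> / \<rho> powr r"
    using assms by (simp add: powr_divide diff_divide_distrib[symmetric])
  also have "\<dots> \<le> 2 * \<bar>u - v\<bar> powr r / \<rho> powr r"
    using abs_sgn_mult_powr_diff_le[OF assms(1,2)] assms by (intro divide_right_mono) auto
  also have "\<dots> = 2 * (\<bar>u - v\<bar> / \<rho>) powr r" using assms by (simp add: powr_divide)
  also have "\<dots> \<le> 2 * (1 + \<bar>u - v\<bar> / \<rho>)" using assms by (intro mult_left_mono powr_le_one_plus) auto
  also have "\<dots> \<le> 2 * (1 + C)" using assms by (simp add: divide_le_eq)
  finally show ?thesis .
qed

lemma mult_le_of_abs_le:
  fixes x y M N :: real
  assumes "\<bar>x\<bar> \<le> M" "\<bar>y\<bar> \<le> N"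
  shows "x * y \<le> M * N"
proof -
  have "x * y \<le> \<bar>x\<bar> * \<bar>y\<bar>" by (simp add: abs_mult[symmetric])
  also have "\<dots> \<le> M * N" using assms by (intro mult_mono) auto
  finally show ?thesis .
qed

lemma self_bounding_le:
  fixes \<Lambda> Mu S \<epsilon> a1 b1 a2 b2 c2 :: real
  assumes "0 \<le> \<Lambda>" "\<Lambda> \<le> a1 + b1 * (\<epsilon> * S)" "Mu \<le> a2 + b2 * (\<epsilon> * S) + c2 * \<Lambda>"
    "S = 1 + \<Lambda> + Mu" "0 \<le> b1" "0 \<le> c2" "\<epsilon> * ((1 + c2) * b1 + b2) \<le> 1/2" "0 \<le> S"
  shows "S \<le> 2 * (1 + a2 + (1 + c2) * a1)"
proof -
  have "c2 * \<Lambda> \<le> c2 * (a1 + b1 * (\<epsilon> * S))" using assms by (intro mult_left_mono) auto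
  then have "S \<le> 1 + a2 + (1 + c2) * a1 + (\<epsilon> * ((1 + c2) * b1 + b2)) * S"
    using assms by (simp add: algebra_simps)
  moreover have "(\<epsilon> * ((1 + c2) * b1 + b2)) * S \<le> 1/2 * S"
    using assms by (intro mult_right_mono) auto
  ultimately have "S \<le> (1 + a2 + (1 + c2) * a1) + 1/2 * S" by linarith
  then show ?thesis by (simp add: field_simps)
qed


lemma sqrt_step_bounds:
  fixes \<theta> \<alpha> L \<epsilon> :: real
  assumes "0 < \<theta>" "0 < \<alpha>" "1 \<le> L" "sqrt \<alpha> \<le> sqrt \<theta> / (2 * L)" "sqrt \<alpha> \<le> \<epsilon> * sqrt \<theta> / (2 * L\<^sup>2)"
  shows "L * \<alpha> \<le> sqrt (\<theta> * \<alpha>) / 2" "2 * L\<^sup>2 * \<alpha> \<le> \<epsilon> * sqrt (\<theta> * \<alpha>)"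
proof -
  have sq: "\<alpha> = sqrt \<alpha> * sqrt \<alpha>" "sqrt (\<theta> * \<alpha>) = sqrt \<theta> * sqrt \<alpha>"
    using assms by (simp_all add: real_sqrt_mult)
  have "L * sqrt \<alpha> \<le> sqrt \<theta> / 2" "2 * L\<^sup>2 * sqrt \<alpha> \<le> \<epsilon> * sqrt \<theta>"
    using assms(3-5) by (simp_all add: le_divide_eq ac_simps)
  then have "(L * sqrt \<alpha>) * sqrt \<alpha> \<le> (sqrt \<theta> / 2) * sqrt \<alpha>"
    "(2 * L\<^sup>2 * sqrt \<alpha>) * sqrt \<alpha> \<le> (\<epsilon> * sqrt \<theta>) * sqrt \<alpha>"
    using assms(2) by (simp_all add: mult_right_mono)
  then show "L * \<alpha> \<le> sqrt (\<theta> * \<alpha>) / 2" "2 * L\<^sup>2 * \<alpha> \<le> \<epsilon> * sqrt (\<theta> * \<alpha>)"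
    unfolding sq(2) by (simp_all only: mult.assoc sq(1)[symmetric])
qed


lemma finite_pos_lower_bound:
  fixes f :: "'i \<Rightarrow> real"
  assumes "finite I" "\<forall>i\<in>I. 0 < f i"
  shows "\<exists>c>0. \<forall>i\<in>I. c \<le> f i"
  using assms by (intro exI[of _ "Min (insert 1 (f ` I))"]) auto

lemma log_barrier_increment_bound:
  fixes a b \<rho> \<alpha> L \<sigma> \<epsilon> :: real
  assumes "\<rho> > 0" "\<alpha> > 0" "\<sigma> > 0" "\<sigma> \<le> - a" "\<bar>b - a\<bar> \<le> L * \<alpha>" "L * \<alpha> \<le> \<sigma> / 2"
    "2 * L\<^sup>2 * \<alpha> \<le> \<epsilon> * \<sigma>"
  shows "b < 0" "- \<rho> * ln (- b) + \<rho> * ln (- a) \<le> \<rho> / (- a) * (b - a) + \<alpha> * \<epsilon> * (\<rho> / (- a))"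
proof -
  have a: "a < 0" and half: "- b \<ge> \<sigma> / 2" using assms by linarith+
  then show b: "b < 0" using assms by linarith
  have "0 \<le> 2 * L\<^sup>2 * \<alpha>" using assms(2) by simp
  then have "0 \<le> \<epsilon> * \<sigma>" using assms(7) by linarith
  then have e: "\<epsilon> \<ge> 0" using assms(3) by (simp add: zero_le_mult_iff)
  have "(b - a)\<^sup>2 \<le> (L * \<alpha>)\<^sup>2" using assms(5) by (metis abs_ge_zero power2_abs power_mono)
  also have "\<dots> = L\<^sup>2 * \<alpha> * \<alpha>" by (simp add: power2_eq_square)
  also have "\<dots> \<le> \<epsilon> * \<sigma> / 2 * \<alpha>" using assms(2,7) by (simp add: mult_right_mono)
  also have "\<dots> \<le> \<epsilon> * \<alpha> * (- b)" using half e assms(2) mult_left_mono[of "\<sigma> / 2" "- b" "\<epsilon> * \<alpha>"]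
    by (simp add: algebra_simps)
  finally have "(b - a)\<^sup>2 / (- b) \<le> \<alpha> * \<epsilon>" using b by (subst pos_divide_le_eq) (auto simp: algebra_simps)
  then have quad: "(\<rho> / (- a)) * ((b - a)\<^sup>2 / (- b)) \<le> (\<rho> / (- a)) * (\<alpha> * \<epsilon>)"
    using a assms(1) by (intro mult_left_mono) (simp_all add: divide_nonneg_neg)
  have "- \<rho> * ln (- b) + \<rho> * ln (- a) \<le> \<rho> / (- b) * (b - a)"
    using log_barrier_increment_le[OF a b assms(1)] .
  also have "\<rho> / (- b) * (b - a) = \<rho> / (- a) * (b - a) + (\<rho> / (- a)) * ((b - a)\<^sup>2 / (- b))"
    using a b by (simp add: field_simps power2_eq_square)
  finally show "- \<rho> * ln (- b) + \<rho> * ln (- a) \<le> \<rho> / (- a) * (b - a) + \<alpha> * \<epsilon> * (\<rho> / (- a))"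
    using quad by (simp add: algebra_simps)
qed

lemma max_penalty_increment_bound:
  fixes a b \<rho> \<alpha> L C \<nu> :: real
  assumes "\<rho> > 0" "1 < \<nu>" "\<nu> \<le> 2" "\<bar>b - a\<bar> \<le> L * \<alpha>" "L * \<alpha> \<le> C * \<rho>"
  shows "(1 / \<rho> powr (\<nu> - 1)) * (max b 0 powr \<nu> - max a 0 powr \<nu>)
     \<le> \<nu> * (max a 0 / \<rho>) powr (\<nu> - 1) * (b - a) + \<alpha> * (L * \<nu> * (1 + C))"
proof -
  define r where "r = \<nu> - 1"
  have r: "0 < r" "r \<le> 1" using assms r_def by auto
  have convex: "max b 0 powr \<nu> - max a 0 powr \<nu> \<le> \<nu> * max b 0 powr r * (b - a)"
  proof (cases "b > 0")
    case True
    have "max b 0 powr \<nu> - max a 0 powr \<nu> \<le> \<nu> * max b 0 powr r * (max b 0 - max a 0)"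
      unfolding r_def by (rule powr_increment_le) (use assms in auto)
    also have "\<dots> \<le> \<nu> * max b 0 powr r * (b - a)"
      using True assms by (intro mult_left_mono) auto
    finally show ?thesis .
  qed (use assms in auto)
  have "\<bar>max b 0 - max a 0\<bar> \<le> C * \<rho>" using assms by linarith
  then have "\<bar>(max b 0 / \<rho>) powr r - (max a 0 / \<rho>) powr r\<bar> \<le> 1 + C"
    using r assms by (intro abs_scaled_powr_diff_le) auto
  then have "\<bar>\<nu> * ((max b 0 / \<rho>) powr r - (max a 0 / \<rho>) powr r)\<bar> \<le> \<nu> * (1 + C)"
    using assms by (simp add: abs_mult)
  then have "\<nu> * ((max b 0 / \<rho>) powr r - (max a 0 / \<rho>) powr r) * (b - a) \<le> \<nu> * (1 + C) * (L * \<alpha>)"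
    using assms(4) by (rule mult_le_of_abs_le)
  moreover have "(1 / \<rho> powr r) * (\<nu> * max b 0 powr r * (b - a)) = \<nu> * (max b 0 / \<rho>) powr r * (b - a)"
    using assms by (simp add: powr_divide)
  moreover have "(1 / \<rho> powr r) * (max b 0 powr \<nu> - max a 0 powr \<nu>)
      \<le> (1 / \<rho> powr r) * (\<nu> * max b 0 powr r * (b - a))"
    using convex assms by (intro mult_left_mono) auto
  ultimately show ?thesis unfolding r_def by (simp add: algebra_simps)
qed

lemma abs_penalty_increment_bound:
  fixes a b \<rho> \<alpha> L C \<nu> :: real
  assumes "\<rho> > 0" "1 < \<nu>" "\<nu> \<le> 2" "\<bar>b - a\<bar> \<le> L * \<alpha>" "L * \<alpha> \<le> C * \<rho>"
  shows "(1 / \<rho> powr (\<nu> - 1)) * (\<bar>b\<bar> powr \<nu> - \<bar>a\<bar> powr \<nu>)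
     \<le> sgn a * (\<nu> * (\<bar>a\<bar> / \<rho>) powr (\<nu> - 1)) * (b - a) + \<alpha> * (L * (2 * \<nu>) * (1 + C))"
proof -
  define r where "r = \<nu> - 1"
  have r: "0 < r" "r \<le> 1" using assms r_def by auto
  have convex: "\<bar>b\<bar> powr \<nu> - \<bar>a\<bar> powr \<nu> \<le> \<nu> * (sgn b * \<bar>b\<bar> powr r) * (b - a)"
  proof (cases "b = 0")
    case False
    have "\<bar>b\<bar> powr \<nu> - \<bar>a\<bar> powr \<nu> \<le> \<nu> * \<bar>b\<bar> powr r * (\<bar>b\<bar> - \<bar>a\<bar>)"
      unfolding r_def by (rule powr_increment_le) (use assms in auto)
    also have "\<dots> \<le> \<nu> * \<bar>b\<bar> powr r * (sgn b * (b - a))"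
      using False assms by (intro mult_left_mono) (auto simp: sgn_if)
    finally show ?thesis by (simp add: algebra_simps)
  qed (use r in simp)
  have "\<bar>b - a\<bar> \<le> C * \<rho>" using assms by linarith
  then have "\<bar>sgn b * (\<bar>b\<bar> / \<rho>) powr r - sgn a * (\<bar>a\<bar> / \<rho>) powr r\<bar> \<le> 2 * (1 + C)"
    using r assms by (intro abs_scaled_sgn_powr_diff_le) auto
  then have "\<bar>\<nu> * (sgn b * (\<bar>b\<bar> / \<rho>) powr r - sgn a * (\<bar>a\<bar> / \<rho>) powr r)\<bar> \<le> \<nu> * (2 * (1 + C))"
    using assms by (simp add: abs_mult)
  then have "\<nu> * (sgn b * (\<bar>b\<bar> / \<rho>) powr r - sgn a * (\<bar>a\<bar> / \<rho>) powr r) * (b - a)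
      \<le> \<nu> * (2 * (1 + C)) * (L * \<alpha>)"
    using assms(4) by (rule mult_le_of_abs_le)
  moreover have "(1 / \<rho> powr r) * (\<nu> * (sgn b * \<bar>b\<bar> powr r) * (b - a))
      = \<nu> * (sgn b * (\<bar>b\<bar> / \<rho>) powr r) * (b - a)"
    using assms by (simp add: powr_divide)
  moreover have "(1 / \<rho> powr r) * (\<bar>b\<bar> powr \<nu> - \<bar>a\<bar> powr \<nu>)
      \<le> (1 / \<rho> powr r) * (\<nu> * (sgn b * \<bar>b\<bar> powr r) * (b - a))"
    using convex assms by (intro mult_left_mono) auto
  ultimately show ?thesis unfolding r_def by (simp add: algebra_simps)
qed

section \<open>Increments, cones and compactness\<close>

lemma mvt_along_segment:
  fixes F :: "'a::euclidean_space \<Rightarrow> real"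
  assumes der: "\<forall>z\<in>U. (F has_derivative (\<lambda>d. dF z \<bullet> d)) (at z)" and "\<alpha> > 0"
    and seg: "\<forall>t\<in>{0..\<alpha>}. x + t *\<^sub>R e \<in> U"
  shows "\<exists>t. 0 < t \<and> t < \<alpha> \<and> F (x + \<alpha> *\<^sub>R e) - F x = \<alpha> * (dF (x + t *\<^sub>R e) \<bullet> e)"
proof -
  have "\<exists>t. 0 < t \<and> t < \<alpha> \<and> F (x + \<alpha> *\<^sub>R e) - F (x + 0 *\<^sub>R e) = (\<alpha> - 0) * (dF (x + t *\<^sub>R e) \<bullet> e)"
  proof (rule MVT2[OF \<open>\<alpha> > 0\<close>])
    fix t :: real assume "0 \<le> t" "t \<le> \<alpha>"
    then have dF: "(F has_derivative (\<lambda>d. dF (x + t *\<^sub>R e) \<bullet> d)) (at (x + t *\<^sub>R e))"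
      using seg der by auto
    have line: "((\<lambda>t. x + t *\<^sub>R e) has_derivative (\<lambda>s. s *\<^sub>R e)) (at t)"
      by (auto intro!: derivative_eq_intros)
    have "((\<lambda>t. F (x + t *\<^sub>R e)) has_derivative (\<lambda>s. dF (x + t *\<^sub>R e) \<bullet> (s *\<^sub>R e))) (at t)"
      using has_derivative_compose[OF line dF] by simp
    then show "((\<lambda>t. F (x + t *\<^sub>R e)) has_real_derivative (dF (x + t *\<^sub>R e) \<bullet> e)) (at t)"
      by (simp add: has_field_derivative_def mult.commute[of _ "dF (x + t *\<^sub>R e) \<bullet> e"])
  qed
  then show ?thesis by simp
qed

lemma increment_near_gradient:
  fixes F :: "'a::euclidean_space \<Rightarrow> real"
  assumes der: "\<forall>z\<in>U. (F has_derivative (\<lambda>d. dF z \<bullet> d)) (at z)" and "\<alpha> > 0" "norm e = 1"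
    and near: "\<forall>t\<in>{0..\<alpha>}. x + t *\<^sub>R e \<in> U \<and> norm (dF (x + t *\<^sub>R e) - G) \<le> \<epsilon>
                 \<and> norm (dF (x + t *\<^sub>R e)) \<le> L"
  shows "\<exists>t. F (x + \<alpha> *\<^sub>R e) - F x = \<alpha> * t \<and> \<bar>t\<bar> \<le> L \<and> \<bar>t - G \<bullet> e\<bar> \<le> \<epsilon>"
proof -
  obtain s where s: "0 < s" "s < \<alpha>" "F (x + \<alpha> *\<^sub>R e) - F x = \<alpha> * (dF (x + s *\<^sub>R e) \<bullet> e)"
    using mvt_along_segment[OF der \<open>\<alpha> > 0\<close>] near by blast
  have n: "norm (dF (x + s *\<^sub>R e)) \<le> L" "norm (dF (x + s *\<^sub>R e) - G) \<le> \<epsilon>" using near s by auto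
  have "\<bar>dF (x + s *\<^sub>R e) \<bullet> e\<bar> \<le> L"
    using Cauchy_Schwarz_ineq2[of "dF (x + s *\<^sub>R e)" e] n \<open>norm e = 1\<close> by simp
  moreover have "\<bar>dF (x + s *\<^sub>R e) \<bullet> e - G \<bullet> e\<bar> \<le> \<epsilon>"
    using Cauchy_Schwarz_ineq2[of "dF (x + s *\<^sub>R e) - G" e] n \<open>norm e = 1\<close> by (simp add: inner_diff_left)
  ultimately show ?thesis using s by blast
qed

lemma eventually_near_finite_family:
  fixes \<Phi> :: "'i \<Rightarrow> 'a::metric_space \<Rightarrow> 'b::real_normed_vector"
  assumes "open U" "x \<in> U" "finite I" "\<forall>i\<in>I. continuous_on U (\<Phi> i)" "\<epsilon> > 0"
  shows "\<exists>r>0. \<forall>v. dist v x < r \<longrightarrow> v \<in> U \<and> (\<forall>i\<in>I. norm (\<Phi> i v - \<Phi> i x) \<le> \<epsilon>)"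
proof -
  have "eventually (\<lambda>v. v \<in> U \<longrightarrow> dist (\<Phi> i v) (\<Phi> i x) < \<epsilon>) (nhds x)" if "i \<in> I" for i
    using assms that unfolding continuous_on_iff eventually_nhds_metric by metis
  then have "eventually (\<lambda>v. \<forall>i\<in>I. v \<in> U \<longrightarrow> dist (\<Phi> i v) (\<Phi> i x) < \<epsilon>) (nhds x)"
    using assms(3) by (intro eventually_ball_finite) auto
  moreover have "eventually (\<lambda>v. v \<in> U) (nhds x)" using assms by (intro eventually_nhds_in_open) auto
  ultimately have "eventually (\<lambda>v. v \<in> U \<and> (\<forall>i\<in>I. norm (\<Phi> i v - \<Phi> i x) \<le> \<epsilon>)) (nhds x)"
    by eventually_elim (auto simp: dist_norm less_imp_le)
  then show ?thesis unfolding eventually_nhds_metric by blast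
qed

lemma continuous_on_Min_finite:
  assumes "finite E" "\<And>e. e \<in> E \<Longrightarrow> continuous_on S (\<lambda>c. f e c)"
  shows "continuous_on S (\<lambda>c. Min ((\<lambda>e. f e c :: real) ` E))"
proof (cases "E = {}")
  case False
  from assms(1) False assms(2) show ?thesis
  proof (induction E rule: finite_ne_induct)
    case (insert x F)
    have "(\<lambda>c. Min ((\<lambda>e. f e c) ` insert x F)) = (\<lambda>c. min (f x c) (Min ((\<lambda>e. f e c) ` F)))"
      using insert by (auto intro!: ext simp: Min_insert)
    then show ?case using insert by (auto intro!: continuous_on_min)
  qed simp
qed simp

lemma compact_uniformly_negative:
  fixes \<phi> :: "'b::topological_space \<Rightarrow> real"
  assumes "compact C" "continuous_on C \<phi>" "\<forall>c\<in>C. \<phi> c < 0"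
  shows "\<exists>\<delta>>0. \<forall>c\<in>C. \<phi> c \<le> - \<delta>"
proof (cases "C = {}")
  case False
  then obtain c0 where "c0 \<in> C" "\<forall>c\<in>C. \<phi> c \<le> \<phi> c0"
    using continuous_attains_sup[OF assms(1) False assms(2)] by blast
  then show ?thesis using assms(3) by (intro exI[of _ "- \<phi> c0"]) auto
qed (auto intro: exI[of _ 1])

lemma inf_sequentially_principal_ne_bot:
  assumes "infinite (K :: nat set)"
  shows "inf sequentially (principal K) \<noteq> bot"
  using assms
  by (simp add: trivial_limit_def eventually_inf_principal not_eventually INFM_iff_infinite
      frequently_cofinite[symmetric] cofinite_eq_sequentially[symmetric])

lemma bounded_image_if_eventually_abs_le:
  fixes u :: "nat \<Rightarrow> real"
  assumes "eventually (\<lambda>k. \<bar>u k\<bar> \<le> M) (inf sequentially (principal K))"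
  shows "bounded (u ` K)"
proof -
  obtain N where N: "\<forall>k\<ge>N. k \<in> K \<longrightarrow> \<bar>u k\<bar> \<le> M"
    using assms by (auto simp: eventually_inf_principal eventually_sequentially)
  have "u ` K \<subseteq> u ` {..<N} \<union> cball 0 M"
  proof
    fix y assume "y \<in> u ` K"
    then obtain k where "k \<in> K" "y = u k" by auto
    then show "y \<in> u ` {..<N} \<union> cball 0 M" using N by (cases "k < N") (auto simp: dist_real_def)
  qed
  moreover have "bounded (u ` {..<N} \<union> cball 0 M)" by (simp add: finite_imp_bounded)
  ultimately show ?thesis using bounded_subset by blast
qed

lemma inner_nonneg_comb_nonneg:
  assumes "finite E" "d \<in> nonneg_comb E" "\<forall>e\<in>E. w \<bullet> e \<ge> 0"
  shows "w \<bullet> d \<ge> (0::real)"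
proof -
  obtain c where c: "\<forall>e\<in>E. c e \<ge> 0" "d = (\<Sum>e\<in>E. c e *\<^sub>R e)"
    using assms(2) unfolding nonneg_comb_def by blast
  have "w \<bullet> d = (\<Sum>e\<in>E. c e * (w \<bullet> e))" unfolding c(2) by (simp add: inner_sum_right)
  also have "\<dots> \<ge> 0" using c assms(3) by (intro sum_nonneg) auto
  finally show ?thesis .
qed

lemma inner_nonneg_comb_ge:
  fixes V :: "'a::real_inner"
  assumes "\<forall>e\<in>S. c e \<ge> 0" "d = (\<Sum>e\<in>S. c e *\<^sub>R e)" "(\<Sum>e\<in>S. c e) \<le> C"
    "\<forall>e\<in>S. V \<bullet> e \<ge> - R" "R \<ge> 0"
  shows "V \<bullet> d \<ge> - R * C"
proof -
  have "- R * C \<le> - R * (\<Sum>e\<in>S. c e)" using assms by (simp add: mult_left_mono)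
  also have "\<dots> = (\<Sum>e\<in>S. c e * (- R))" by (simp add: sum_distrib_left mult.commute)
  also have "\<dots> \<le> (\<Sum>e\<in>S. c e * (V \<bullet> e))" using assms by (intro sum_mono mult_left_mono) auto
  also have "\<dots> = V \<bullet> d" using assms(2) by (simp add: inner_sum_right)
  finally show ?thesis .
qed

lemma nonneg_comb_mono:
  assumes "S \<subseteq> S'" "finite S'" "d \<in> nonneg_comb S"
  shows "d \<in> nonneg_comb S'"
proof -
  obtain c where c: "\<forall>e\<in>S. c e \<ge> 0" "d = (\<Sum>e\<in>S. c e *\<^sub>R e)"
    using assms(3) unfolding nonneg_comb_def by blast
  define c' where "c' e = (if e \<in> S then c e else 0)" for e
  have "(\<Sum>e\<in>S'. c' e *\<^sub>R e) = (\<Sum>e\<in>S'. if e \<in> S then c e *\<^sub>R e else 0)"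
    by (intro sum.cong) (auto simp: c'_def)
  also have "\<dots> = (\<Sum>e\<in>{e\<in>S'. e \<in> S}. c e *\<^sub>R e)" using assms(2) by (simp add: sum.inter_filter)
  also have "{e\<in>S'. e \<in> S} = S" using assms(1) by auto
  finally show ?thesis unfolding nonneg_comb_def using c by (intro CollectI exI[of _ c']) (auto simp: c'_def)
qed

text \<open>The bound is uniform in \<open>S\<close> because \<open>Dall\<close> has only finitely many subsets.\<close>
lemma nonneg_comb_bounded_coeffs:
  assumes "finite Dall"
  shows "\<exists>C\<ge>0. \<forall>S\<subseteq>Dall. d \<in> nonneg_comb S \<longrightarrow>
           (\<exists>c. (\<forall>e\<in>S. c e \<ge> 0) \<and> d = (\<Sum>e\<in>S. c e *\<^sub>R e) \<and> (\<Sum>e\<in>S. c e) \<le> C)"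
proof -
  define cS where "cS S = (SOME c. (\<forall>e\<in>S. c e \<ge> 0) \<and> d = (\<Sum>e\<in>S. c e *\<^sub>R e))" for S
  have cS: "(\<forall>e\<in>S. cS S e \<ge> 0) \<and> d = (\<Sum>e\<in>S. cS S e *\<^sub>R e)" if "d \<in> nonneg_comb S" for S
  proof -
    have "\<exists>c. (\<forall>e\<in>S. c e \<ge> 0) \<and> d = (\<Sum>e\<in>S. c e *\<^sub>R e)" using that unfolding nonneg_comb_def by blast
    then show ?thesis unfolding cS_def by (rule someI_ex)
  qed
  define P where "P = {S. S \<subseteq> Dall \<and> d \<in> nonneg_comb S}"
  have finP: "finite P" unfolding P_def using assms by (auto intro: finite_subset[of _ "Pow Dall"])
  have nn: "(\<Sum>e\<in>S. cS S e) \<ge> 0" if "S \<in> P" for S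
    using cS[of S] that unfolding P_def by (auto intro!: sum_nonneg)
  show ?thesis
  proof (intro exI[of _ "\<Sum>S\<in>P. \<Sum>e\<in>S. cS S e"] conjI allI impI)
    show "0 \<le> (\<Sum>S\<in>P. \<Sum>e\<in>S. cS S e)" using nn by (auto intro: sum_nonneg)
    fix S assume S: "S \<subseteq> Dall" "d \<in> nonneg_comb S"
    then have "(\<Sum>e\<in>S. cS S e) \<le> (\<Sum>S\<in>P. \<Sum>e\<in>S. cS S e)"
      using finP nn by (intro member_le_sum) (auto simp: P_def)
    then show "\<exists>c. (\<forall>e\<in>S. c e \<ge> 0) \<and> d = (\<Sum>e\<in>S. c e *\<^sub>R e) \<and> (\<Sum>e\<in>S. c e) \<le> (\<Sum>S\<in>P. \<Sum>e\<in>S. cS S e)"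
      using cS[OF S(2)] by blast
  qed
qed

lemma compact_l1_sphere:
  assumes "finite I"
  shows "compact {c :: nat \<Rightarrow> real. (\<forall>i. i \<notin> I \<longrightarrow> c i = 0) \<and> (\<Sum>i\<in>I. \<bar>c i\<bar>) = 1}"
proof -
  define Q where "Q = PiE UNIV (\<lambda>i. if i \<in> I then {-1..1} else {0::real})"
  have "compactin (product_topology (\<lambda>i. euclidean) UNIV) Q"
    unfolding Q_def by (subst compactin_PiE) auto
  then have "compact Q" by (simp add: euclidean_product_topology)
  moreover have "closed {c :: nat \<Rightarrow> real. (\<Sum>i\<in>I. \<bar>c i\<bar>) = 1}"
    by (intro closed_Collect_eq continuous_intros continuous_on_product_coordinates)
  ultimately have "compact (Q \<inter> {c. (\<Sum>i\<in>I. \<bar>c i\<bar>) = 1})" using compact_Int_closed by blast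
  moreover have "\<bar>c i\<bar> \<le> 1" if "(\<Sum>i\<in>I. \<bar>c i\<bar>) = 1" "i \<in> I" for c :: "nat \<Rightarrow> real" and i
    using that member_le_sum[of i I "\<lambda>i. \<bar>c i\<bar>"] assms by simp
  then have "Q \<inter> {c. (\<Sum>i\<in>I. \<bar>c i\<bar>) = 1} = {c. (\<forall>i. i \<notin> I \<longrightarrow> c i = 0) \<and> (\<Sum>i\<in>I. \<bar>c i\<bar>) = 1}"
    unfolding Q_def by (auto simp: PiE_iff abs_le_iff) (metis empty_iff insert_iff)
  ultimately show ?thesis by simp
qed

text \<open>Compactness makes the separation in condition (a) of the MFCQ uniform over normalised
  multipliers, when tested only against finitely many generators of the cone.\<close>
lemma uniform_negative_generator:
  fixes H :: "nat \<Rightarrow> 'a::euclidean_space" and E T :: "'a set"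
  assumes fin: "finite E" and span: "\<forall>d\<in>T. d \<in> nonneg_comb E"
    and indep: "\<not> (\<exists>c :: nat \<Rightarrow> real. (\<exists>i\<in>{1..p}. c i \<noteq> 0) \<and> (\<forall>d\<in>T. (\<Sum>i\<in>{1..p}. c i *\<^sub>R H i) \<bullet> d \<ge> 0))"
  shows "\<exists>\<delta>>0. \<forall>c. (\<Sum>i\<in>{1..p}. \<bar>c i\<bar>) = 1 \<longrightarrow> (\<exists>e\<in>E. (\<Sum>i\<in>{1..p}. c i *\<^sub>R H i) \<bullet> e \<le> - \<delta>)"
proof -
  define w where "w c = (\<Sum>i\<in>{1..p}. c i *\<^sub>R H i)" for c :: "nat \<Rightarrow> real"
  define C1 where "C1 = {c :: nat \<Rightarrow> real. (\<forall>i. i \<notin> {1..p} \<longrightarrow> c i = 0) \<and> (\<Sum>i\<in>{1..p}. \<bar>c i\<bar>) = 1}"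
  define \<phi> where "\<phi> c = Min ((\<lambda>e. w c \<bullet> e) ` E)" for c
  have \<phi>: "\<phi> c < 0 \<and> (\<exists>e\<in>E. \<phi> c = w c \<bullet> e)" if "c \<in> C1" for c
  proof -
    have "\<exists>i\<in>{1..p}. c i \<noteq> 0"
      using that unfolding C1_def by (metis (mono_tags, lifting) abs_zero mem_Collect_eq sum.neutral zero_neq_one)
    then obtain e0 where e0: "e0 \<in> E" "w c \<bullet> e0 < 0"
      using inner_nonneg_comb_nonneg[OF fin] span indep unfolding w_def by (meson not_le)
    have "\<phi> c \<le> w c \<bullet> e0" unfolding \<phi>_def using e0 fin by (intro Min_le) auto
    moreover have "\<phi> c \<in> (\<lambda>e. w c \<bullet> e) ` E" unfolding \<phi>_def using fin e0 by (intro Min_in) auto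
    ultimately show ?thesis using e0 by auto
  qed
  have "continuous_on C1 (\<lambda>c. w c \<bullet> e)" for e
    unfolding w_def inner_sum_left inner_scaleR_left
    by (intro continuous_on_sum continuous_on_mult_right
        continuous_on_subset[OF continuous_on_product_coordinates]) auto
  then have "continuous_on C1 \<phi>" unfolding \<phi>_def by (intro continuous_on_Min_finite fin)
  moreover have "compact C1" unfolding C1_def by (rule compact_l1_sphere) simp
  ultimately obtain \<delta> where \<delta>: "\<delta> > 0" "\<forall>c\<in>C1. \<phi> c \<le> - \<delta>"
    using compact_uniformly_negative \<phi> by blast
  show ?thesis
  proof (intro exI[of _ \<delta>] conjI allI impI)
    fix c :: "nat \<Rightarrow> real" assume cs: "(\<Sum>i\<in>{1..p}. \<bar>c i\<bar>) = 1"
    define c' where "c' i = (if i \<in> {1..p} then c i else 0)" for i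
    have "(\<Sum>i\<in>{1..p}. \<bar>c' i\<bar>) = (\<Sum>i\<in>{1..p}. \<bar>c i\<bar>)" by (rule sum.cong) (auto simp: c'_def)
    then have "c' \<in> C1" using cs unfolding C1_def c'_def by auto
    moreover have "w c' = w c" unfolding w_def by (rule sum.cong) (auto simp: c'_def)
    ultimately show "\<exists>e\<in>E. (\<Sum>i\<in>{1..p}. c i *\<^sub>R H i) \<bullet> e \<le> - \<delta>"
      using \<phi> \<delta>(2) unfolding w_def by metis
  qed (use \<delta> in simp)
qed

section \<open>Polyhedral tangent cones\<close>

lemma polyX_inactive_slack:
  fixes a :: "nat \<Rightarrow> 'a::euclidean_space"
  shows "\<exists>\<sigma>>0. \<forall>i\<in>{1..q}. a i \<bullet> x < b i \<longrightarrow> \<sigma> \<le> b i - a i \<bullet> x"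
  using finite_pos_lower_bound[of "{i\<in>{1..q}. a i \<bullet> x < b i}" "\<lambda>i. b i - a i \<bullet> x"] by auto

lemma tcone_eps_eq_tcone:
  assumes "x \<in> polyX a b q" "\<forall>i\<in>{1..q}. a i \<bullet> x < b i \<longrightarrow> \<sigma> \<le> b i - a i \<bullet> x" "0 < \<epsilon>" "2 * \<epsilon> \<le> \<sigma>"
    and close: "\<forall>i\<in>{1..q}. \<bar>a i \<bullet> y - a i \<bullet> x\<bar> < \<epsilon> / 2"
  shows "tcone_eps a b q y \<epsilon> = tcone a b q x"
proof -
  have "a i \<bullet> y \<ge> b i - \<epsilon> \<longleftrightarrow> a i \<bullet> x = b i" if i: "i \<in> {1..q}" for i
  proof (cases "a i \<bullet> x = b i")
    case False
    then have "\<sigma> \<le> b i - a i \<bullet> x" using assms i unfolding polyX_def by force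
    then show ?thesis using False close i assms(3,4) by force
  next
    case True
    have "\<bar>a i \<bullet> y - a i \<bullet> x\<bar> < \<epsilon> / 2" using close i by blast
    then have "b i - \<epsilon> \<le> a i \<bullet> y" using True assms(3) unfolding abs_less_iff by linarith
    then show ?thesis using True by simp
  qed
  then show ?thesis unfolding tcone_eps_def tcone_def by auto
qed

lemma polyX_step_mem:
  assumes "x \<in> polyX a b q" "y \<in> polyX a b q" "\<forall>i\<in>{1..q}. a i \<bullet> x < b i \<longrightarrow> \<sigma> \<le> b i - a i \<bullet> x"
    and e: "e \<in> tcone a b q x" "norm e = 1" and "0 \<le> t"
    and close: "\<forall>i\<in>{1..q}. \<bar>a i \<bullet> y - a i \<bullet> x\<bar> + t * norm (a i) < \<sigma>"
  shows "y + t *\<^sub>R e \<in> polyX a b q"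
proof -
  have "a i \<bullet> (y + t *\<^sub>R e) \<le> b i" if i: "i \<in> {1..q}" for i
  proof (cases "a i \<bullet> x = b i")
    case True
    then have "t * (a i \<bullet> e) \<le> 0" using e i \<open>0 \<le> t\<close> unfolding tcone_def by (auto simp: mult_nonneg_nonpos)
    moreover have "a i \<bullet> y \<le> b i" using assms(2) i unfolding polyX_def by auto
    ultimately show ?thesis by (simp add: inner_add_right)
  next
    case False
    then have "\<sigma> \<le> b i - a i \<bullet> x" using assms(1,3) i unfolding polyX_def by force
    moreover have "t * (a i \<bullet> e) \<le> t * norm (a i)"
      using Cauchy_Schwarz_ineq2[of "a i" e] e \<open>0 \<le> t\<close> by (intro mult_left_mono) auto
    moreover have "\<bar>a i \<bullet> y - a i \<bullet> x\<bar> + t * norm (a i) < \<sigma>" using close i by blast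
    ultimately show ?thesis by (simp add: inner_add_right abs_less_iff)
  qed
  then show ?thesis unfolding polyX_def by auto
qed

section \<open>The merit function\<close>

definition merit_domain :: "(nat \<Rightarrow> 'a \<Rightarrow> real) \<Rightarrow> nat \<Rightarrow> 'a \<Rightarrow> 'a set \<Rightarrow> 'a set" where
  "merit_domain g m x0 X = {x \<in> X. \<forall>l\<in>Glog g m x0. g l x < 0}"

definition penalty_term :: "(nat \<Rightarrow> 'a \<Rightarrow> real) \<Rightarrow> nat \<Rightarrow> 'a \<Rightarrow> real \<Rightarrow> real \<Rightarrow> nat \<Rightarrow> 'a \<Rightarrow> real" where
  "penalty_term g m x0 \<nu> \<rho> l x =
     (if l \<in> Glog g m x0 then - \<rho> * ln (- g l x) else (1 / \<rho> powr (\<nu> - 1)) * max (g l x) 0 powr \<nu>)"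

definition eq_penalty_term :: "(nat \<Rightarrow> 'a \<Rightarrow> real) \<Rightarrow> real \<Rightarrow> real \<Rightarrow> nat \<Rightarrow> 'a \<Rightarrow> real" where
  "eq_penalty_term h \<nu> \<rho> j x = (1 / \<rho> powr (\<nu> - 1)) * \<bar>h j x\<bar> powr \<nu>"

lemma meritZ_eq_penalty_sum:
  assumes "x \<in> merit_domain g m x0 X"
  shows "meritZ f g h m p X x0 \<nu> \<rho> x = ereal (f x + (\<Sum>l\<in>{1..m}. penalty_term g m x0 \<nu> \<rho> l x)
           + (\<Sum>j\<in>{1..p}. eq_penalty_term h \<nu> \<rho> j x))"
proof -
  have "{1..m} \<inter> {l. l \<in> Glog g m x0} = Glog g m x0" "{1..m} \<inter> - {l. l \<in> Glog g m x0} = Gext g m x0"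
    unfolding Glog_def Gext_def by auto
  then have "(\<Sum>l\<in>{1..m}. penalty_term g m x0 \<nu> \<rho> l x)
      = - \<rho> * (\<Sum>l\<in>Glog g m x0. ln (- g l x)) + (1 / \<rho> powr (\<nu> - 1)) * (\<Sum>l\<in>Gext g m x0. max (g l x) 0 powr \<nu>)"
    unfolding penalty_term_def by (simp add: sum.If_cases sum_distrib_left)
  then show ?thesis
    using assms unfolding meritZ_def merit_domain_def eq_penalty_term_def by (simp add: sum_distrib_left sum_negf)
qed

lemma meritZ_outside:
  "x \<notin> merit_domain g m x0 X \<Longrightarrow> meritZ f g h m p X x0 \<nu> \<rho> x = \<infinity>"
  unfolding meritZ_def merit_domain_def by auto

lemma lam_nonneg:
  assumes "\<rho> > 0" "0 \<le> \<nu>" "l \<in> Glog g m x0 \<Longrightarrow> g l x < 0"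
  shows "0 \<le> lam g m x0 \<nu> l x \<rho>"
  using assms unfolding lam_def by (auto simp: divide_nonneg_neg)

lemma penalty_term_increment_le:
  assumes "\<rho> > 0" "\<alpha> > 0" "1 < \<nu>" "\<nu> \<le> 2" "\<epsilon> \<ge> 0" "L \<ge> 0" "C \<ge> 0" "\<sigma> > 0"
    and t: "g l y - g l x = \<alpha> * t" "\<bar>t\<bar> \<le> L" "\<bar>t - s\<bar> \<le> \<epsilon>"
    and margin: "l \<in> Glog g m x0 \<Longrightarrow> \<sigma> \<le> - g l x"
    and small: "L * \<alpha> \<le> \<sigma> / 2" "2 * L\<^sup>2 * \<alpha> \<le> \<epsilon> * \<sigma>" "L * \<alpha> \<le> C * \<rho>"
  shows "penalty_term g m x0 \<nu> \<rho> l y - penalty_term g m x0 \<nu> \<rho> l x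
     \<le> \<alpha> * (lam g m x0 \<nu> l x \<rho> * s + 2 * \<epsilon> * lam g m x0 \<nu> l x \<rho> + L * \<nu> * (1 + C))"
proof -
  define lam_x where "lam_x = lam g m x0 \<nu> l x \<rho>"
  have bl: "\<bar>g l y - g l x\<bar> \<le> L * \<alpha>" using t assms(2) by (simp add: abs_mult mult.commute mult_right_mono)
  have "lam_x \<ge> 0" unfolding lam_x_def using assms margin by (intro lam_nonneg) auto
  then have "lam_x * (t - s) \<le> lam_x * \<epsilon>" using t(3) by (intro mult_left_mono) auto
  moreover have "0 \<le> \<epsilon> * lam_x" "0 \<le> L * \<nu> * (1 + C)" using \<open>lam_x \<ge> 0\<close> assms by simp_all
  ultimately have tt: "lam_x * t + \<epsilon> * lam_x \<le> lam_x * s + 2 * \<epsilon> * lam_x + L * \<nu> * (1 + C)"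
    "lam_x * t + L * \<nu> * (1 + C) \<le> lam_x * s + 2 * \<epsilon> * lam_x + L * \<nu> * (1 + C)"
    by (simp_all add: algebra_simps)
  show ?thesis
  proof (cases "l \<in> Glog g m x0")
    case True
    have "penalty_term g m x0 \<nu> \<rho> l y - penalty_term g m x0 \<nu> \<rho> l x
        \<le> \<rho> / (- g l x) * (g l y - g l x) + \<alpha> * \<epsilon> * (\<rho> / (- g l x))"
      using log_barrier_increment_bound(2)[OF assms(1,2,8) margin[OF True] bl small(1,2)] True
      unfolding penalty_term_def by simp
    also have "\<dots> = \<alpha> * (lam_x * t + \<epsilon> * lam_x)" using True t(1) unfolding lam_x_def lam_def by (simp add: algebra_simps)
    also have "\<dots> \<le> \<alpha> * (lam_x * s + 2 * \<epsilon> * lam_x + L * \<nu> * (1 + C))"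
      using tt(1) assms(2) by (intro mult_left_mono) auto
    finally show ?thesis unfolding lam_x_def .
  next
    case False
    have "penalty_term g m x0 \<nu> \<rho> l y - penalty_term g m x0 \<nu> \<rho> l x
        \<le> \<nu> * (max (g l x) 0 / \<rho>) powr (\<nu> - 1) * (g l y - g l x) + \<alpha> * (L * \<nu> * (1 + C))"
      using max_penalty_increment_bound[OF assms(1,3,4) bl small(3)] False
      unfolding penalty_term_def by (simp add: right_diff_distrib)
    also have "\<dots> = \<alpha> * (lam_x * t + L * \<nu> * (1 + C))" using False t(1) unfolding lam_x_def lam_def by (simp add: algebra_simps)
    also have "\<dots> \<le> \<alpha> * (lam_x * s + 2 * \<epsilon> * lam_x + L * \<nu> * (1 + C))"
      using tt(2) assms(2) by (intro mult_left_mono) auto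
    finally show ?thesis unfolding lam_x_def .
  qed
qed

lemma eq_penalty_term_increment_le:
  assumes "\<rho> > 0" "\<alpha> > 0" "1 < \<nu>" "\<nu> \<le> 2" "\<epsilon> \<ge> 0"
    and t: "h j y - h j x = \<alpha> * t" "\<bar>t\<bar> \<le> L" "\<bar>t - s\<bar> \<le> \<epsilon>" and small: "L * \<alpha> \<le> C * \<rho>"
  shows "eq_penalty_term h \<nu> \<rho> j y - eq_penalty_term h \<nu> \<rho> j x
     \<le> \<alpha> * (sgn (h j x) * mu h \<nu> j x \<rho> * s + \<epsilon> * mu h \<nu> j x \<rho> + L * (2 * \<nu>) * (1 + C))"
proof -
  define \<mu> where "\<mu> = mu h \<nu> j x \<rho>"
  have bl: "\<bar>h j y - h j x\<bar> \<le> L * \<alpha>" using t assms(2) by (simp add: abs_mult mult.commute mult_right_mono)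
  have "\<bar>sgn (h j x) * \<mu>\<bar> \<le> \<mu>" unfolding \<mu>_def mu_def using assms by (simp add: abs_mult abs_sgn_eq)
  then have "sgn (h j x) * \<mu> * (t - s) \<le> \<mu> * \<epsilon>" using t(3) by (rule mult_le_of_abs_le)
  then have tt: "sgn (h j x) * \<mu> * t \<le> sgn (h j x) * \<mu> * s + \<epsilon> * \<mu>" by (simp add: algebra_simps)
  have "eq_penalty_term h \<nu> \<rho> j y - eq_penalty_term h \<nu> \<rho> j x
      \<le> sgn (h j x) * (\<nu> * (\<bar>h j x\<bar> / \<rho>) powr (\<nu> - 1)) * (h j y - h j x) + \<alpha> * (L * (2 * \<nu>) * (1 + C))"
    using abs_penalty_increment_bound[OF assms(1,3,4) bl small]
    unfolding eq_penalty_term_def by (simp add: right_diff_distrib)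
  also have "\<dots> = \<alpha> * (sgn (h j x) * \<mu> * t + L * (2 * \<nu>) * (1 + C))"
    using t(1) unfolding \<mu>_def mu_def by (simp add: algebra_simps)
  also have "\<dots> \<le> \<alpha> * (sgn (h j x) * \<mu> * s + \<epsilon> * \<mu> + L * (2 * \<nu>) * (1 + C))"
    using tt assms(2) by (intro mult_left_mono) auto
  finally show ?thesis unfolding \<mu>_def .
qed

lemma meritZ_no_decrease_bound:
  assumes "x \<in> merit_domain g m x0 X" "y \<in> merit_domain g m x0 X"
    and no_decrease: "\<not> (meritZ f g h m p X x0 \<nu> \<rho> y \<le> meritZ f g h m p X x0 \<nu> \<rho> x - ereal \<xi>a)"
    and "f y - f x \<le> \<alpha> * Lf"
    and "\<forall>l\<in>{1..m}. penalty_term g m x0 \<nu> \<rho> l y - penalty_term g m x0 \<nu> \<rho> l x \<le> \<alpha> * P l"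
    and "\<forall>j\<in>{1..p}. eq_penalty_term h \<nu> \<rho> j y - eq_penalty_term h \<nu> \<rho> j x \<le> \<alpha> * Q j"
  shows "- \<xi>a < \<alpha> * (Lf + (\<Sum>l\<in>{1..m}. P l) + (\<Sum>j\<in>{1..p}. Q j))"
proof -
  have "- \<xi>a < (f y - f x) + (\<Sum>l\<in>{1..m}. penalty_term g m x0 \<nu> \<rho> l y - penalty_term g m x0 \<nu> \<rho> l x)
      + (\<Sum>j\<in>{1..p}. eq_penalty_term h \<nu> \<rho> j y - eq_penalty_term h \<nu> \<rho> j x)"
    using no_decrease unfolding meritZ_eq_penalty_sum[OF assms(1)] meritZ_eq_penalty_sum[OF assms(2)]
    by (simp add: sum_subtractf)
  also have "\<dots> \<le> \<alpha> * Lf + (\<Sum>l\<in>{1..m}. \<alpha> * P l) + (\<Sum>j\<in>{1..p}. \<alpha> * Q j)"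
    using assms(4-6) by (intro add_mono sum_mono) auto
  finally show ?thesis by (simp add: sum_distrib_left algebra_simps)
qed

section \<open>Iterates of LOG-DS\<close>

locale logds_iteration =
  fixes f :: "'a::euclidean_space \<Rightarrow> real"
    and g h :: "nat \<Rightarrow> 'a \<Rightarrow> real"
    and df :: "'a \<Rightarrow> 'a" and dg dh :: "nat \<Rightarrow> 'a \<Rightarrow> 'a"
    and a :: "nat \<Rightarrow> 'a" and b :: "nat \<Rightarrow> real" and q m p :: nat
    and U :: "'a set" and x0 :: 'a
    and \<alpha>0 \<rho>0 \<nu> \<theta>\<alpha> \<theta>\<rho> \<phi> \<beta> :: real and \<xi> :: "real \<Rightarrow> real"
    and D :: "nat \<Rightarrow> 'a set" and xs :: "nat \<Rightarrow> 'a" and \<alpha> \<rho> :: "nat \<Rightarrow> real"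
  assumes U: "open U" "polyX a b q \<subseteq> U"
    and f_C1: "C1_grad U f df"
    and g_C1: "\<forall>l\<in>{1..m}. C1_grad U (g l) (dg l)"
    and h_C1: "\<forall>j\<in>{1..p}. C1_grad U (h j) (dh j)"
    and params: "\<alpha>0 > 0" "\<rho>0 > 0" "1 < \<nu>" "\<nu> \<le> 2" "0 < \<theta>\<alpha>"
       "0 < \<theta>\<rho>" "\<theta>\<rho> < 1" "\<phi> \<ge> 1" "\<beta> > 1"
    and forcing: "forcing \<xi>"
    and Glog_ne: "Glog g m x0 \<noteq> {}"
    and compact: "compact (polyX a b q \<inter> Omega_log g m x0)"
    and x0: "x0 \<in> polyX a b q" "\<forall>l\<in>Glog g m x0. g l x0 < 0"
    and poll: "poll_dir_assumption a b q D xs"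
    and run: "logds_run f g h m p (polyX a b q) x0 \<alpha>0 \<rho>0 \<nu> \<theta>\<alpha> \<theta>\<rho> \<phi> \<beta> \<xi> D xs \<alpha> \<rho>"
begin

abbreviation X :: "'a set" where "X \<equiv> polyX a b q"

abbreviation Z :: "nat \<Rightarrow> 'a \<Rightarrow> ereal" where "Z k \<equiv> meritZ f g h m p X x0 \<nu> (\<rho> k)"

abbreviation gmin :: "nat \<Rightarrow> real" where "gmin k \<equiv> Min ((\<lambda>l. \<bar>g l (xs k)\<bar>) ` Glog g m x0)"

lemma iteration_cases:
  obtains (successful) "xs (Suc k) \<in> X" "Z k (xs (Suc k)) \<le> Z k (xs k) - ereal (\<xi> (\<alpha> k))"
      "\<alpha> (Suc k) = \<phi> * \<alpha> k" "\<rho> (Suc k) = \<rho> k"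
  | (unsuccessful) "\<forall>d\<in>D k. xs k + \<alpha> k *\<^sub>R d \<in> X \<longrightarrow> \<not> Z k (xs k + \<alpha> k *\<^sub>R d) \<le> Z k (xs k) - ereal (\<xi> (\<alpha> k))"
      "xs (Suc k) = xs k" "\<alpha> (Suc k) = \<theta>\<alpha> * \<alpha> k"
      "\<rho> (Suc k) = (if \<alpha> (Suc k) \<le> min (\<rho> k powr \<beta>) ((gmin k)\<^sup>2) then \<theta>\<rho> * \<rho> k else \<rho> k)"
  using run unfolding logds_run_def Let_def by blast

lemma iteration_step:
  assumes "\<alpha> k > 0" "\<rho> k > 0" "xs k \<in> merit_domain g m x0 X"
  shows "\<alpha> (Suc k) > 0 \<and> \<rho> (Suc k) > 0 \<and> \<rho> (Suc k) \<le> \<rho> k \<and> xs (Suc k) \<in> merit_domain g m x0 X"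
proof (cases k rule: iteration_cases)
  case successful
  obtain r where "Z k (xs k) = ereal r" using meritZ_eq_penalty_sum[OF assms(3)] by blast
  then have "Z k (xs (Suc k)) \<noteq> \<infinity>" using successful(2) by auto
  then have "xs (Suc k) \<in> merit_domain g m x0 X" using meritZ_outside by blast
  moreover have "\<alpha> (Suc k) > 0" using successful(3) assms(1) params(8) by simp
  ultimately show ?thesis using successful(4) assms(2) by simp
next
  case unsuccessful
  have "\<theta>\<rho> * \<rho> k \<le> \<rho> k" using assms(2) params(7) by simp
  then show ?thesis using unsuccessful assms params by auto
qed

lemma iterate_invariants: "\<alpha> k > 0 \<and> \<rho> k > 0 \<and> \<rho> (Suc k) \<le> \<rho> k \<and> xs k \<in> merit_domain g m x0 X"
proof -
  have "\<alpha> k > 0 \<and> \<rho> k > 0 \<and> xs k \<in> merit_domain g m x0 X"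
  proof (induction k)
    case 0
    show ?case using run params x0 unfolding logds_run_def merit_domain_def by auto
  qed (use iteration_step in blast)
  then show ?thesis using iteration_step by blast
qed

lemma rho_decrease_step:
  assumes "\<rho> (Suc k) < \<rho> k"
  shows "\<forall>d\<in>D k. xs k + \<alpha> k *\<^sub>R d \<in> X \<longrightarrow> \<not> Z k (xs k + \<alpha> k *\<^sub>R d) \<le> Z k (xs k) - ereal (\<xi> (\<alpha> k))"
    and "\<rho> (Suc k) = \<theta>\<rho> * \<rho> k" "\<theta>\<alpha> * \<alpha> k \<le> \<rho> k powr \<beta>" "\<theta>\<alpha> * \<alpha> k \<le> (gmin k)\<^sup>2"
  using assms by (cases k rule: iteration_cases; auto split: if_splits)+

lemma rho_le_rho0: "\<rho> k \<le> \<rho>0"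
proof -
  have "decseq \<rho>" using iterate_invariants by (intro decseq_SucI) blast
  then show ?thesis using run unfolding logds_run_def decseq_def by auto
qed

end

section \<open>Multipliers along a subsequence of barrier decreases\<close>

locale logds_limit = logds_iteration +
  fixes K :: "nat set" and xstar :: 'a
  assumes K_sub: "K \<subseteq> {k. \<rho> (Suc k) < \<rho> k}"
    and K_inf: "infinite K"
    and conv: "filterlim xs (nhds xstar) (inf sequentially (principal K))"
    and mfcq: "MFCQ a b q g dg dh m p xstar"
begin

abbreviation FK :: "nat filter" where "FK \<equiv> inf sequentially (principal K)"

lemma FK_ne_bot: "FK \<noteq> bot"
  using K_inf by (rule inf_sequentially_principal_ne_bot)

lemma eventually_in_K: "eventually (\<lambda>k. k \<in> K) FK"
  by (simp add: eventually_inf_principal)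

lemma K_rho_decrease: "k \<in> K \<Longrightarrow> \<rho> (Suc k) < \<rho> k"
  using K_sub by blast

lemma rho_tendsto_0: "\<rho> \<longlonglongrightarrow> 0"
proof -
  have "decseq \<rho>" using iterate_invariants by (intro decseq_SucI) blast
  moreover have "\<rho> k \<ge> 0" for k using iterate_invariants less_imp_le by blast
  moreover have "Bseq \<rho>" using rho_le_rho0 \<open>\<And>k. \<rho> k \<ge> 0\<close> by (intro BseqI'[of _ \<rho>0]) auto
  ultimately obtain L where L: "\<rho> \<longlonglongrightarrow> L"
    using Bseq_monoseq_convergent[of \<rho>] by (auto simp: convergent_def monoseq_def decseq_def)
  have "((\<lambda>k. \<rho> (Suc k)) \<longlongrightarrow> L) FK" using LIMSEQ_Suc[OF L] by (rule filterlim_mono) auto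
  moreover have "eventually (\<lambda>k. \<rho> (Suc k) = \<theta>\<rho> * \<rho> k) FK"
    using eventually_in_K by eventually_elim (rule rho_decrease_step(2)[OF K_rho_decrease])
  ultimately have "((\<lambda>k. \<theta>\<rho> * \<rho> k) \<longlongrightarrow> L) FK" by (rule Lim_transform_eventually)
  moreover have "((\<lambda>k. \<theta>\<rho> * \<rho> k) \<longlongrightarrow> \<theta>\<rho> * L) FK" using tendsto_mult_left[OF L] by (rule filterlim_mono) auto
  ultimately have "L = \<theta>\<rho> * L" using FK_ne_bot by (intro tendsto_unique)
  then show ?thesis using L params(7) by simp
qed

lemma alpha_tendsto_0: "(\<alpha> \<longlongrightarrow> 0) FK"
proof (rule tendsto_sandwich[of "\<lambda>k. 0" _ _ "\<lambda>k. \<rho> k powr \<beta> / \<theta>\<alpha>"])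
  show "eventually (\<lambda>k. 0 \<le> \<alpha> k) FK" using iterate_invariants by (auto intro!: always_eventually less_imp_le)
  show "eventually (\<lambda>k. \<alpha> k \<le> \<rho> k powr \<beta> / \<theta>\<alpha>) FK"
    using eventually_in_K
  proof eventually_elim
    case (elim k)
    then show ?case using rho_decrease_step(3)[OF K_rho_decrease] params(5) by (simp add: pos_le_divide_eq mult.commute)
  qed
  have "(\<rho> \<longlongrightarrow> 0) FK" using rho_tendsto_0 by (rule filterlim_mono) auto
  then have "((\<lambda>k. \<rho> k powr \<beta>) \<longlongrightarrow> 0) FK"
    by (rule tendsto_zero_powrI[OF _ tendsto_const])
       (use iterate_invariants params in \<open>auto intro!: always_eventually less_imp_le\<close>)
  then show "((\<lambda>k. \<rho> k powr \<beta> / \<theta>\<alpha>) \<longlongrightarrow> 0) FK" using tendsto_divide_zero by blast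
qed simp

lemma eventually_forcing_le: "eventually (\<lambda>k. \<xi> (\<alpha> k) \<le> \<alpha> k) FK"
proof -
  have "\<alpha> k > 0" for k using iterate_invariants by blast
  then have "filterlim \<alpha> (at_right 0) FK"
    unfolding filterlim_at using alpha_tendsto_0 by (auto intro!: always_eventually simp: less_imp_neq[symmetric])
  moreover have "((\<lambda>t. \<xi> t / t) \<longlongrightarrow> 0) (at_right 0)" using forcing unfolding forcing_def by blast
  ultimately have "((\<lambda>k. \<xi> (\<alpha> k) / \<alpha> k) \<longlongrightarrow> 0) FK" by (rule filterlim_compose[rotated])
  then have "eventually (\<lambda>k. \<xi> (\<alpha> k) / \<alpha> k < 1) FK" by (rule order_tendstoD) simp
  then show ?thesis
    by eventually_elim (use iterate_invariants in \<open>auto simp: divide_less_eq less_imp_le\<close>)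
qed

lemma xstar_in_X: "xstar \<in> X"
proof -
  have "xstar \<in> X \<inter> Omega_log g m x0"
  proof (rule Lim_in_closed_set[OF _ _ FK_ne_bot conv])
    show "closed (X \<inter> Omega_log g m x0)" using compact by (rule compact_imp_closed)
    show "eventually (\<lambda>k. xs k \<in> X \<inter> Omega_log g m x0) FK"
      using iterate_invariants by (auto intro!: always_eventually simp: merit_domain_def Omega_log_def less_imp_le)
  qed
  then show ?thesis by blast
qed

definition grads :: "('a \<Rightarrow> 'a) set" where
  "grads = insert df (dg ` {1..m} \<union> dh ` {1..p})"

definition Lg :: real where
  "Lg = 1 + (\<Sum>\<Phi>\<in>grads. norm (\<Phi> xstar))"

lemma Lg_ge_1: "Lg \<ge> 1"
  unfolding Lg_def by (simp add: sum_nonneg)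

lemma gradients_near:
  assumes "\<epsilon> > 0"
  shows "\<exists>r>0. \<forall>v. dist v xstar < r \<longrightarrow> v \<in> U \<and>
           (\<forall>\<Phi>\<in>grads. norm (\<Phi> v - \<Phi> xstar) \<le> \<epsilon> \<and> norm (\<Phi> v) \<le> Lg)"
proof -
  have "\<forall>\<Phi>\<in>grads. continuous_on U \<Phi>" using f_C1 g_C1 h_C1 unfolding grads_def C1_grad_def by blast
  moreover have "finite grads" "xstar \<in> U" "min \<epsilon> 1 > 0"
    using xstar_in_X U(2) assms unfolding grads_def by auto
  ultimately obtain r where r: "r > 0"
    "\<forall>v. dist v xstar < r \<longrightarrow> v \<in> U \<and> (\<forall>\<Phi>\<in>grads. norm (\<Phi> v - \<Phi> xstar) \<le> min \<epsilon> 1)"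
    using eventually_near_finite_family[OF U(1), of xstar grads "\<lambda>\<Phi>. \<Phi>" "min \<epsilon> 1"] by blast
  have "norm (\<Phi> v) \<le> Lg" if "\<Phi> \<in> grads" "norm (\<Phi> v - \<Phi> xstar) \<le> 1" for \<Phi> v
  proof -
    have "norm (\<Phi> xstar) \<le> (\<Sum>\<Phi>\<in>grads. norm (\<Phi> xstar))"
      using that(1) by (intro member_le_sum) (auto simp: grads_def)
    then show ?thesis using norm_triangle_ineq2[of "\<Phi> v" "\<Phi> xstar"] that(2) unfolding Lg_def by linarith
  qed
  with r show ?thesis by (intro exI[of _ r]) fastforce
qed

definition segment_near_xstar :: "real \<Rightarrow> nat \<Rightarrow> 'a \<Rightarrow> bool" where
  "segment_near_xstar \<epsilon> k e \<longleftrightarrow> (\<forall>t\<in>{0..\<alpha> k}. xs k + t *\<^sub>R e \<in> U \<and>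
     (\<forall>\<Phi>\<in>grads. norm (\<Phi> (xs k + t *\<^sub>R e) - \<Phi> xstar) \<le> \<epsilon> \<and> norm (\<Phi> (xs k + t *\<^sub>R e)) \<le> Lg))"

abbreviation Tstar where "Tstar \<equiv> tcone a b q xstar"

lemma unit_poll_directions: "e \<in> D k \<Longrightarrow> norm e = 1"
  using poll unfolding poll_dir_assumption_def by blast

lemma eventually_poll_cone:
  "eventually (\<lambda>k. nonneg_comb (D k \<inter> Tstar) = Tstar \<and> (\<forall>e\<in>D k \<inter> Tstar. xs k + \<alpha> k *\<^sub>R e \<in> X)) FK"
proof -
  obtain epsb where epsb: "epsb > 0" "\<forall>k eps. 0 < eps \<and> eps \<le> epsb \<longrightarrow>
      nonneg_comb (D k \<inter> tcone_eps a b q (xs k) eps) = tcone_eps a b q (xs k) eps"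
    using poll unfolding poll_dir_assumption_def by blast
  obtain \<sigma> where \<sigma>: "\<sigma> > 0" "\<forall>i\<in>{1..q}. a i \<bullet> xstar < b i \<longrightarrow> \<sigma> \<le> b i - a i \<bullet> xstar"
    using polyX_inactive_slack by blast
  define \<epsilon> where "\<epsilon> = min epsb (\<sigma> / 2)"
  have \<epsilon>: "0 < \<epsilon>" "\<epsilon> \<le> epsb" "2 * \<epsilon> \<le> \<sigma>" using epsb \<sigma> by (auto simp: \<epsilon>_def)
  have "((\<lambda>k. \<bar>a i \<bullet> xs k - a i \<bullet> xstar\<bar> + \<alpha> k * norm (a i)) \<longlongrightarrow> 0) FK" for i
  proof -
    have "((\<lambda>k. a i \<bullet> xs k - a i \<bullet> xstar) \<longlongrightarrow> 0) FK" using conv by (intro LIM_zero tendsto_intros)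
    then show ?thesis
      using tendsto_mult_left_zero[OF alpha_tendsto_0, of "norm (a i)"] by (intro tendsto_add_zero tendsto_rabs_zero)
  qed
  then have "eventually (\<lambda>k. \<forall>i\<in>{1..q}. \<bar>a i \<bullet> xs k - a i \<bullet> xstar\<bar> + \<alpha> k * norm (a i) < \<epsilon> / 2) FK"
    using \<epsilon>(1) by (intro eventually_ball_finite ballI order_tendstoD(2)) auto
  then show ?thesis
  proof eventually_elim
    case (elim k)
    have "\<alpha> k > 0" "xs k \<in> X" using iterate_invariants unfolding merit_domain_def by auto
    have "\<forall>i\<in>{1..q}. \<bar>a i \<bullet> xs k - a i \<bullet> xstar\<bar> < \<epsilon> / 2"
    proof
      fix i assume "i \<in> {1..q}"
      then have "\<bar>a i \<bullet> xs k - a i \<bullet> xstar\<bar> + \<alpha> k * norm (a i) < \<epsilon> / 2" using elim by blast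
      moreover have "0 \<le> \<alpha> k * norm (a i)" using \<open>\<alpha> k > 0\<close> by simp
      ultimately show "\<bar>a i \<bullet> xs k - a i \<bullet> xstar\<bar> < \<epsilon> / 2" by linarith
    qed
    then have "tcone_eps a b q (xs k) \<epsilon> = Tstar" by (rule tcone_eps_eq_tcone[OF xstar_in_X \<sigma>(2) \<epsilon>(1,3)])
    moreover have "xs k + \<alpha> k *\<^sub>R e \<in> X" if "e \<in> D k \<inter> Tstar" for e
    proof (rule polyX_step_mem[OF xstar_in_X \<open>xs k \<in> X\<close> \<sigma>(2)])
      show "\<forall>i\<in>{1..q}. \<bar>a i \<bullet> xs k - a i \<bullet> xstar\<bar> + \<alpha> k * norm (a i) < \<sigma>" using elim \<epsilon> by force
    qed (use that unit_poll_directions \<open>\<alpha> k > 0\<close> in auto)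
    ultimately show ?case using epsb(2) \<epsilon> by metis
  qed
qed

abbreviation lamk :: "nat \<Rightarrow> nat \<Rightarrow> real" where "lamk l k \<equiv> lam g m x0 \<nu> l (xs k) (\<rho> k)"

abbreviation muk :: "nat \<Rightarrow> nat \<Rightarrow> real" where "muk j k \<equiv> mu h \<nu> j (xs k) (\<rho> k)"

definition V :: "nat \<Rightarrow> 'a" where
  "V k = (\<Sum>l\<in>{1..m}. lamk l k *\<^sub>R dg l xstar) + (\<Sum>j\<in>{1..p}. (sgn (h j (xs k)) * muk j k) *\<^sub>R dh j xstar)"

definition S :: "nat \<Rightarrow> real" where
  "S k = 1 + (\<Sum>l\<in>{1..m}. lamk l k) + (\<Sum>j\<in>{1..p}. muk j k)"

definition C\<rho> :: real where
  "C\<rho> = Lg * \<rho>0 powr (\<beta> - 1) / \<theta>\<alpha>"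

definition B :: real where
  "B = 1 + Lg + real m * (Lg * \<nu> * (1 + C\<rho>)) + real p * (Lg * (2 * \<nu>) * (1 + C\<rho>))"

lemma lamk_nonneg: "lamk l k \<ge> 0"
  using iterate_invariants[of k] params(3) by (intro lam_nonneg) (auto simp: merit_domain_def)

lemma muk_nonneg: "muk j k \<ge> 0"
  using params(3) unfolding mu_def by simp

lemma S_ge_1: "S k \<ge> 1"
  unfolding S_def using lamk_nonneg muk_nonneg by (simp add: sum_nonneg)

lemma B_nonneg: "B \<ge> 0"
  unfolding B_def C\<rho>_def using Lg_ge_1 params by simp

lemma inner_V: "V k \<bullet> e = (\<Sum>l\<in>{1..m}. lamk l k * (dg l xstar \<bullet> e))
    + (\<Sum>j\<in>{1..p}. sgn (h j (xs k)) * muk j k * (dh j xstar \<bullet> e))"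
  unfolding V_def by (simp add: inner_add_left inner_sum_left)

lemma barrier_margin:
  assumes "k \<in> K" "l \<in> Glog g m x0"
  shows "sqrt (\<theta>\<alpha> * \<alpha> k) \<le> - g l (xs k)"
proof -
  have fin: "finite (Glog g m x0)" unfolding Glog_def by simp
  have "gmin k \<in> (\<lambda>l. \<bar>g l (xs k)\<bar>) ` Glog g m x0" using fin Glog_ne by (intro Min_in) auto
  then have "gmin k \<ge> 0" by auto
  have "sqrt (\<theta>\<alpha> * \<alpha> k) \<le> sqrt ((gmin k)\<^sup>2)"
    by (rule real_sqrt_le_mono) (rule rho_decrease_step(4)[OF K_rho_decrease[OF assms(1)]])
  also have "\<dots> \<le> \<bar>g l (xs k)\<bar>" using \<open>gmin k \<ge> 0\<close> fin assms(2) by (simp add: Min_le)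
  also have "\<dots> = - g l (xs k)" using iterate_invariants[of k] assms(2) unfolding merit_domain_def by force
  finally show ?thesis .
qed

lemma step_le_rho:
  assumes "k \<in> K"
  shows "Lg * \<alpha> k \<le> C\<rho> * \<rho> k"
proof -
  have "\<rho> k > 0" using iterate_invariants by blast
  have "\<theta>\<alpha> * \<alpha> k \<le> \<rho> k powr \<beta>" by (rule rho_decrease_step(3)[OF K_rho_decrease[OF assms]])
  also have "\<rho> k powr \<beta> = \<rho> k powr (\<beta> - 1) * \<rho> k" using \<open>\<rho> k > 0\<close> by (simp add: powr_diff)
  also have "\<dots> \<le> \<rho>0 powr (\<beta> - 1) * \<rho> k"
    using \<open>\<rho> k > 0\<close> params rho_le_rho0[of k] by (intro mult_right_mono powr_mono2) auto
  finally have "\<alpha> k \<le> \<rho>0 powr (\<beta> - 1) * \<rho> k / \<theta>\<alpha>" using params by (simp add: pos_le_divide_eq mult.commute)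
  then have "Lg * \<alpha> k \<le> Lg * (\<rho>0 powr (\<beta> - 1) * \<rho> k / \<theta>\<alpha>)" using Lg_ge_1 by (intro mult_left_mono) auto
  then show ?thesis unfolding C\<rho>_def by (simp add: algebra_simps)
qed


lemma poll_step_increment:
  assumes "C1_grad U F dF" "dF \<in> grads" "e \<in> D k" "segment_near_xstar \<epsilon> k e"
  shows "\<exists>t. F (xs k + \<alpha> k *\<^sub>R e) - F (xs k) = \<alpha> k * t \<and> \<bar>t\<bar> \<le> Lg \<and> \<bar>t - dF xstar \<bullet> e\<bar> \<le> \<epsilon>"
  using increment_near_gradient[of U F dF "\<alpha> k" e "xs k" "dF xstar" \<epsilon> Lg] assms iterate_invariants[of k]
    unit_poll_directions unfolding C1_grad_def segment_near_xstar_def by auto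

lemma poll_point_in_merit_domain:
  assumes "k \<in> K" "e \<in> D k" "xs k + \<alpha> k *\<^sub>R e \<in> X" "segment_near_xstar \<epsilon> k e"
    and small: "Lg * \<alpha> k \<le> sqrt (\<theta>\<alpha> * \<alpha> k) / 2" "2 * Lg\<^sup>2 * \<alpha> k \<le> \<epsilon> * sqrt (\<theta>\<alpha> * \<alpha> k)"
  shows "xs k + \<alpha> k *\<^sub>R e \<in> merit_domain g m x0 X"
proof -
  have pos: "\<rho> k > 0" "\<alpha> k > 0" "sqrt (\<theta>\<alpha> * \<alpha> k) > 0" using iterate_invariants params by auto
  have "g l (xs k + \<alpha> k *\<^sub>R e) < 0" if l: "l \<in> Glog g m x0" for l
  proof -
    have "l \<in> {1..m}" using l unfolding Glog_def by blast
    then obtain t where "g l (xs k + \<alpha> k *\<^sub>R e) - g l (xs k) = \<alpha> k * t" "\<bar>t\<bar> \<le> Lg"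
      using poll_step_increment[of "g l" "dg l"] g_C1 assms(2,4) unfolding grads_def by blast
    then have "\<bar>g l (xs k + \<alpha> k *\<^sub>R e) - g l (xs k)\<bar> \<le> Lg * \<alpha> k"
      using pos by (simp add: abs_mult mult.commute mult_right_mono)
    then show ?thesis using log_barrier_increment_bound(1)[OF pos barrier_margin[OF assms(1) l] _ small] by simp
  qed
  then show ?thesis using assms(3) unfolding merit_domain_def by auto
qed

lemma poll_penalty_increments:
  assumes "k \<in> K" "e \<in> D k" "\<epsilon> > 0" "segment_near_xstar \<epsilon> k e"
    and small: "Lg * \<alpha> k \<le> sqrt (\<theta>\<alpha> * \<alpha> k) / 2" "2 * Lg\<^sup>2 * \<alpha> k \<le> \<epsilon> * sqrt (\<theta>\<alpha> * \<alpha> k)"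
  shows "\<forall>l\<in>{1..m}. penalty_term g m x0 \<nu> (\<rho> k) l (xs k + \<alpha> k *\<^sub>R e) - penalty_term g m x0 \<nu> (\<rho> k) l (xs k)
      \<le> \<alpha> k * (lamk l k * (dg l xstar \<bullet> e) + 2 * \<epsilon> * lamk l k + Lg * \<nu> * (1 + C\<rho>))"
    and "\<forall>j\<in>{1..p}. eq_penalty_term h \<nu> (\<rho> k) j (xs k + \<alpha> k *\<^sub>R e) - eq_penalty_term h \<nu> (\<rho> k) j (xs k)
      \<le> \<alpha> k * (sgn (h j (xs k)) * muk j k * (dh j xstar \<bullet> e) + \<epsilon> * muk j k + Lg * (2 * \<nu>) * (1 + C\<rho>))"
proof -
  have pos: "\<rho> k > 0" "\<alpha> k > 0" "sqrt (\<theta>\<alpha> * \<alpha> k) > 0" using iterate_invariants params by auto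
  have C\<rho>: "C\<rho> \<ge> 0" "Lg \<ge> 0" using Lg_ge_1 params unfolding C\<rho>_def by auto
  have LC: "Lg * \<alpha> k \<le> C\<rho> * \<rho> k" by (rule step_le_rho[OF assms(1)])
  show "\<forall>l\<in>{1..m}. penalty_term g m x0 \<nu> (\<rho> k) l (xs k + \<alpha> k *\<^sub>R e) - penalty_term g m x0 \<nu> (\<rho> k) l (xs k)
      \<le> \<alpha> k * (lamk l k * (dg l xstar \<bullet> e) + 2 * \<epsilon> * lamk l k + Lg * \<nu> * (1 + C\<rho>))"
  proof
    fix l assume "l \<in> {1..m}"
    then obtain t where t: "g l (xs k + \<alpha> k *\<^sub>R e) - g l (xs k) = \<alpha> k * t" "\<bar>t\<bar> \<le> Lg"
        "\<bar>t - dg l xstar \<bullet> e\<bar> \<le> \<epsilon>"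
      using poll_step_increment[of "g l" "dg l"] g_C1 assms(2,4) unfolding grads_def by blast
    show "penalty_term g m x0 \<nu> (\<rho> k) l (xs k + \<alpha> k *\<^sub>R e) - penalty_term g m x0 \<nu> (\<rho> k) l (xs k)
        \<le> \<alpha> k * (lamk l k * (dg l xstar \<bullet> e) + 2 * \<epsilon> * lamk l k + Lg * \<nu> * (1 + C\<rho>))"
      using penalty_term_increment_le[where g = g and l = l and x = "xs k" and m = m and x0 = x0,
          OF pos(1,2) params(3,4) _ C\<rho>(2,1) pos(3) t barrier_margin[OF assms(1)] small LC] assms(3) by simp
  qed
  show "\<forall>j\<in>{1..p}. eq_penalty_term h \<nu> (\<rho> k) j (xs k + \<alpha> k *\<^sub>R e) - eq_penalty_term h \<nu> (\<rho> k) j (xs k)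
      \<le> \<alpha> k * (sgn (h j (xs k)) * muk j k * (dh j xstar \<bullet> e) + \<epsilon> * muk j k + Lg * (2 * \<nu>) * (1 + C\<rho>))"
  proof
    fix j assume "j \<in> {1..p}"
    then obtain t where t: "h j (xs k + \<alpha> k *\<^sub>R e) - h j (xs k) = \<alpha> k * t" "\<bar>t\<bar> \<le> Lg"
        "\<bar>t - dh j xstar \<bullet> e\<bar> \<le> \<epsilon>"
      using poll_step_increment[of "h j" "dh j"] h_C1 assms(2,4) unfolding grads_def by blast
    show "eq_penalty_term h \<nu> (\<rho> k) j (xs k + \<alpha> k *\<^sub>R e) - eq_penalty_term h \<nu> (\<rho> k) j (xs k)
        \<le> \<alpha> k * (sgn (h j (xs k)) * muk j k * (dh j xstar \<bullet> e) + \<epsilon> * muk j k + Lg * (2 * \<nu>) * (1 + C\<rho>))"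
      using eq_penalty_term_increment_le[where h = h and j = j and x = "xs k", OF pos(1,2) params(3,4) _ t LC]
        assms(3) by simp
  qed
qed

lemma poll_direction_bound:
  assumes k: "k \<in> K" and e: "e \<in> D k \<inter> Tstar" "xs k + \<alpha> k *\<^sub>R e \<in> X"
    and forcing_k: "\<xi> (\<alpha> k) \<le> \<alpha> k" and "\<epsilon> > 0" and near: "segment_near_xstar \<epsilon> k e"
    and small: "Lg * \<alpha> k \<le> sqrt (\<theta>\<alpha> * \<alpha> k) / 2" "2 * Lg\<^sup>2 * \<alpha> k \<le> \<epsilon> * sqrt (\<theta>\<alpha> * \<alpha> k)"
  shows "V k \<bullet> e \<ge> - B - 2 * \<epsilon> * S k"
proof -
  have pos: "\<alpha> k > 0" and x: "xs k \<in> merit_domain g m x0 X" using iterate_invariants by auto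
  have y: "xs k + \<alpha> k *\<^sub>R e \<in> merit_domain g m x0 X"
    using poll_point_in_merit_domain[OF k _ e(2) near small] e(1) by blast
  have no_decrease: "\<not> Z k (xs k + \<alpha> k *\<^sub>R e) \<le> Z k (xs k) - ereal (\<xi> (\<alpha> k))"
    using rho_decrease_step(1)[OF K_rho_decrease[OF k]] e by blast
  have "f (xs k + \<alpha> k *\<^sub>R e) - f (xs k) \<le> \<alpha> k * Lg"
    using poll_step_increment[OF f_C1 _ _ near] e(1) pos by (auto simp: grads_def intro: mult_left_mono)
  from meritZ_no_decrease_bound[OF x y no_decrease this poll_penalty_increments[OF k _ \<open>\<epsilon> > 0\<close> near small]]
  have "- \<xi> (\<alpha> k) < \<alpha> k * (Lg
      + (\<Sum>l\<in>{1..m}. lamk l k * (dg l xstar \<bullet> e) + 2 * \<epsilon> * lamk l k + Lg * \<nu> * (1 + C\<rho>))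
      + (\<Sum>j\<in>{1..p}. sgn (h j (xs k)) * muk j k * (dh j xstar \<bullet> e) + \<epsilon> * muk j k + Lg * (2 * \<nu>) * (1 + C\<rho>)))"
    using e(1) by blast
  also have "\<dots> = \<alpha> k * (Lg + V k \<bullet> e + 2 * \<epsilon> * (\<Sum>l\<in>{1..m}. lamk l k) + \<epsilon> * (\<Sum>j\<in>{1..p}. muk j k)
      + real m * (Lg * \<nu> * (1 + C\<rho>)) + real p * (Lg * (2 * \<nu>) * (1 + C\<rho>)))" (is "_ = \<alpha> k * ?W")
    unfolding inner_V by (simp add: sum.distrib sum_distrib_left algebra_simps)
  finally have "\<alpha> k * (- 1) < \<alpha> k * ?W" using forcing_k by linarith
  then have "- 1 < ?W" using mult_less_cancel_left_pos[OF pos] by blast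
  moreover have "\<epsilon> * (\<Sum>j\<in>{1..p}. muk j k) \<le> 2 * \<epsilon> * (\<Sum>j\<in>{1..p}. muk j k)"
    using \<open>\<epsilon> > 0\<close> muk_nonneg by (simp add: sum_nonneg)
  moreover have "B + 2 * \<epsilon> * S k = 1 + Lg + real m * (Lg * \<nu> * (1 + C\<rho>)) + real p * (Lg * (2 * \<nu>) * (1 + C\<rho>))
      + 2 * \<epsilon> + 2 * \<epsilon> * (\<Sum>l\<in>{1..m}. lamk l k) + 2 * \<epsilon> * (\<Sum>j\<in>{1..p}. muk j k)"
    unfolding B_def S_def by (simp add: algebra_simps)
  ultimately show ?thesis using \<open>\<epsilon> > 0\<close> by linarith
qed

lemma eventually_poll_lower_bound:
  assumes "\<epsilon> > 0"
  shows "eventually (\<lambda>k. \<forall>e\<in>D k \<inter> Tstar. V k \<bullet> e \<ge> - B - 2 * \<epsilon> * S k) FK"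
proof -
  obtain r where r: "r > 0" "\<forall>v. dist v xstar < r \<longrightarrow> v \<in> U \<and>
      (\<forall>\<Phi>\<in>grads. norm (\<Phi> v - \<Phi> xstar) \<le> \<epsilon> \<and> norm (\<Phi> v) \<le> Lg)"
    using gradients_near[OF assms] by blast
  define \<eta> where "\<eta> = min (sqrt \<theta>\<alpha> / (2 * Lg)) (\<epsilon> * sqrt \<theta>\<alpha> / (2 * Lg\<^sup>2))"
  have "\<eta> > 0" using params assms Lg_ge_1 by (simp add: \<eta>_def)
  have "((\<lambda>k. dist (xs k) xstar) \<longlongrightarrow> 0) FK" using conv tendsto_dist_iff by blast
  then have "((\<lambda>k. dist (xs k) xstar + \<alpha> k) \<longlongrightarrow> 0) FK" using alpha_tendsto_0 by (rule tendsto_add_zero)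
  then have close: "eventually (\<lambda>k. dist (xs k) xstar + \<alpha> k < r) FK" using r(1) by (rule order_tendstoD(2))
  have small: "eventually (\<lambda>k. sqrt (\<alpha> k) < \<eta>) FK"
    using tendsto_real_sqrt[OF alpha_tendsto_0] \<open>\<eta> > 0\<close> by (intro order_tendstoD(2)) auto
  from eventually_in_K close small eventually_poll_cone eventually_forcing_le show ?thesis
  proof eventually_elim
    case (elim k)
    have pos: "\<alpha> k > 0" using iterate_invariants by blast
    have "sqrt (\<alpha> k) \<le> sqrt \<theta>\<alpha> / (2 * Lg)" "sqrt (\<alpha> k) \<le> \<epsilon> * sqrt \<theta>\<alpha> / (2 * Lg\<^sup>2)"
      using elim(3) unfolding \<eta>_def by auto
    then have "Lg * \<alpha> k \<le> sqrt (\<theta>\<alpha> * \<alpha> k) / 2" "2 * Lg\<^sup>2 * \<alpha> k \<le> \<epsilon> * sqrt (\<theta>\<alpha> * \<alpha> k)"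
      by (rule sqrt_step_bounds[OF params(5) pos Lg_ge_1])+
    moreover have "segment_near_xstar \<epsilon> k e" if "norm e = 1" for e
      unfolding segment_near_xstar_def
    proof
      fix t assume t: "t \<in> {0..\<alpha> k}"
      have "dist (xs k + t *\<^sub>R e) xstar \<le> dist (xs k) xstar + dist (xs k + t *\<^sub>R e) (xs k)"
        using dist_triangle[of "xs k + t *\<^sub>R e" xstar "xs k"] by (simp add: dist_commute)
      also have "dist (xs k + t *\<^sub>R e) (xs k) = t" using t that by (simp add: dist_norm)
      finally show "xs k + t *\<^sub>R e \<in> U \<and> (\<forall>\<Phi>\<in>grads. norm (\<Phi> (xs k + t *\<^sub>R e) - \<Phi> xstar) \<le> \<epsilon>
          \<and> norm (\<Phi> (xs k + t *\<^sub>R e)) \<le> Lg)"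
        using r(2) elim(2) t by auto
    qed
    ultimately show ?case
      using poll_direction_bound[OF elim(1) _ _ elim(5) assms] elim(4) unit_poll_directions by blast
  qed
qed


definition E :: "'a set" where
  "E = (\<Union>k. D k) \<inter> Tstar"

lemma finite_E: "finite E"
  using poll unfolding E_def poll_dir_assumption_def by auto

lemma Tstar_generated_by_E: "\<forall>d\<in>Tstar. d \<in> nonneg_comb E"
proof -
  obtain k where "nonneg_comb (D k \<inter> Tstar) = Tstar"
    using eventually_happens'[OF FK_ne_bot eventually_poll_cone] by blast
  then show ?thesis using finite_E nonneg_comb_mono[of "D k \<inter> Tstar" E] unfolding E_def by blast
qed

lemma eventually_inner_V_lower_bound:
  assumes "d \<in> Tstar"
  shows "\<exists>C\<ge>0. \<forall>\<epsilon>>0. eventually (\<lambda>k. V k \<bullet> d \<ge> - (B + 2 * \<epsilon> * S k) * C) FK"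
proof -
  have "finite (\<Union>k. D k)" using poll unfolding poll_dir_assumption_def by blast
  then obtain C where C: "C \<ge> 0" "\<forall>S'\<subseteq>(\<Union>k. D k). d \<in> nonneg_comb S' \<longrightarrow>
      (\<exists>c. (\<forall>e\<in>S'. c e \<ge> 0) \<and> d = (\<Sum>e\<in>S'. c e *\<^sub>R e) \<and> (\<Sum>e\<in>S'. c e) \<le> C)"
    using nonneg_comb_bounded_coeffs by blast
  have "eventually (\<lambda>k. V k \<bullet> d \<ge> - (B + 2 * \<epsilon> * S k) * C) FK" if "\<epsilon> > 0" for \<epsilon>
    using eventually_poll_cone eventually_poll_lower_bound[OF that]
  proof eventually_elim
    case (elim k)
    have "D k \<inter> Tstar \<subseteq> (\<Union>k. D k)" "d \<in> nonneg_comb (D k \<inter> Tstar)" using elim(1) assms by auto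
    from C(2)[rule_format, OF this] obtain c where c: "\<forall>e\<in>D k \<inter> Tstar. c e \<ge> 0"
        "d = (\<Sum>e\<in>D k \<inter> Tstar. c e *\<^sub>R e)" "(\<Sum>e\<in>D k \<inter> Tstar. c e) \<le> C"
      by blast
    have "\<forall>e\<in>D k \<inter> Tstar. V k \<bullet> e \<ge> - (B + 2 * \<epsilon> * S k)" using elim(2) by simp
    moreover have "B + 2 * \<epsilon> * S k \<ge> 0" using B_nonneg S_ge_1[of k] that by simp
    ultimately show ?case by (rule inner_nonneg_comb_ge[OF c])
  qed
  then show ?thesis using C(1) by blast
qed

lemma eventually_inactive_lam_le:
  assumes "l \<in> {1..m}" "g l xstar < 0"
  shows "eventually (\<lambda>k. lamk l k \<le> 2 * \<rho>0 / (- g l xstar)) FK"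
proof -
  have "isCont (g l) xstar"
    using g_C1 assms(1) xstar_in_X U(2) unfolding C1_grad_def by (blast intro: has_derivative_continuous)
  then have "((\<lambda>k. g l (xs k)) \<longlongrightarrow> g l xstar) FK" using conv by (rule isCont_tendsto_compose)
  then have "eventually (\<lambda>k. g l (xs k) < g l xstar / 2) FK" using assms(2) by (intro order_tendstoD(2)) auto
  then show ?thesis
  proof eventually_elim
    case (elim k)
    show ?case
    proof (cases "l \<in> Glog g m x0")
      case True
      have "\<rho> k / (- g l (xs k)) \<le> \<rho>0 / (- g l xstar / 2)"
        using elim assms(2) rho_le_rho0[of k] iterate_invariants[of k] by (intro frac_le) auto
      then show ?thesis using True unfolding lam_def by (simp add: mult.commute)
    next
      case False
      then show ?thesis using elim assms(2) params unfolding lam_def by (simp add: divide_nonneg_neg)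
    qed
  qed
qed


lemma lam_sum_le:
  assumes "\<gamma> > 0" "A \<subseteq> {1..m}" and d: "\<forall>l\<in>A. dg l xstar \<bullet> d \<le> - \<gamma>" "\<forall>j\<in>{1..p}. dh j xstar \<bullet> d = 0"
    and inactive: "\<forall>l\<in>{1..m} - A. lamk l k \<le> Bl l" and "V k \<bullet> d \<ge> - R"
  shows "(\<Sum>l\<in>{1..m}. lamk l k) \<le> (\<Sum>l\<in>{1..m} - A. Bl l) + ((\<Sum>l\<in>{1..m} - A. Bl l * \<bar>dg l xstar \<bullet> d\<bar>) + R) / \<gamma>"
proof -
  have split: "(\<Sum>l\<in>{1..m}. F l) = (\<Sum>l\<in>A. F l) + (\<Sum>l\<in>{1..m} - A. F l)" for F :: "nat \<Rightarrow> real"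
    using sum.subset_diff[OF assms(2), of F] by (simp add: add.commute)
  have "V k \<bullet> d = (\<Sum>l\<in>A. lamk l k * (dg l xstar \<bullet> d)) + (\<Sum>l\<in>{1..m} - A. lamk l k * (dg l xstar \<bullet> d))"
    unfolding inner_V split[symmetric] using d(2) by simp
  also have "\<dots> \<le> (\<Sum>l\<in>A. lamk l k * (- \<gamma>)) + (\<Sum>l\<in>{1..m} - A. Bl l * \<bar>dg l xstar \<bullet> d\<bar>)"
  proof (intro add_mono sum_mono)
    show "lamk l k * (dg l xstar \<bullet> d) \<le> lamk l k * - \<gamma>" if "l \<in> A" for l
      using d(1) that lamk_nonneg by (intro mult_left_mono) auto
    show "lamk l k * (dg l xstar \<bullet> d) \<le> Bl l * \<bar>dg l xstar \<bullet> d\<bar>" if "l \<in> {1..m} - A" for l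
      using inactive that lamk_nonneg by (intro mult_le_of_abs_le) auto
  qed
  also have "\<dots> = - (\<gamma> * (\<Sum>l\<in>A. lamk l k)) + (\<Sum>l\<in>{1..m} - A. Bl l * \<bar>dg l xstar \<bullet> d\<bar>)"
    by (simp add: sum_distrib_left mult.commute sum_negf)
  finally have "(\<Sum>l\<in>A. lamk l k) \<le> ((\<Sum>l\<in>{1..m} - A. Bl l * \<bar>dg l xstar \<bullet> d\<bar>) + R) / \<gamma>"
    using assms(6) \<open>\<gamma> > 0\<close> by (simp add: le_divide_eq mult.commute)
  moreover have "(\<Sum>l\<in>{1..m} - A. lamk l k) \<le> (\<Sum>l\<in>{1..m} - A. Bl l)" using inactive by (intro sum_mono) auto
  ultimately show ?thesis unfolding split[of "\<lambda>l. lamk l k"] by linarith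
qed

lemma lam_sum_bound:
  "\<exists>a1 b1. 0 \<le> b1 \<and> (\<forall>\<epsilon>>0. eventually (\<lambda>k. (\<Sum>l\<in>{1..m}. lamk l k) \<le> a1 + b1 * (\<epsilon> * S k)) FK)"
proof -
  obtain d where d: "d \<in> Tstar" "\<forall>l\<in>{1..m}. g l xstar \<ge> 0 \<longrightarrow> dg l xstar \<bullet> d < 0"
      "\<forall>j\<in>{1..p}. dh j xstar \<bullet> d = 0"
    using mfcq unfolding MFCQ_def by blast
  define A where "A = {l\<in>{1..m}. g l xstar \<ge> 0}"
  obtain \<gamma> where \<gamma>: "\<gamma> > 0" "\<forall>l\<in>A. dg l xstar \<bullet> d \<le> - \<gamma>"
    using finite_pos_lower_bound[of A "\<lambda>l. - (dg l xstar \<bullet> d)"] d(2) unfolding A_def by force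
  obtain C where C: "C \<ge> 0" "\<forall>\<epsilon>>0. eventually (\<lambda>k. V k \<bullet> d \<ge> - (B + 2 * \<epsilon> * S k) * C) FK"
    using eventually_inner_V_lower_bound[OF d(1)] by blast
  define Bl where "Bl l = 2 * \<rho>0 / (- g l xstar)" for l
  have inactive: "eventually (\<lambda>k. \<forall>l\<in>{1..m} - A. lamk l k \<le> Bl l) FK"
    unfolding Bl_def A_def by (intro eventually_ball_finite ballI eventually_inactive_lam_le) auto
  define a1 where "a1 = (\<Sum>l\<in>{1..m} - A. Bl l) + ((\<Sum>l\<in>{1..m} - A. Bl l * \<bar>dg l xstar \<bullet> d\<bar>) + B * C) / \<gamma>"
  have "eventually (\<lambda>k. (\<Sum>l\<in>{1..m}. lamk l k) \<le> a1 + 2 * C / \<gamma> * (\<epsilon> * S k)) FK" if "\<epsilon> > 0" for \<epsilon>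
    using inactive C(2)[rule_format, OF that]
  proof eventually_elim
    case (elim k)
    have "A \<subseteq> {1..m}" unfolding A_def by auto
    from lam_sum_le[OF \<gamma>(1) this \<gamma>(2) d(3) elim(1), of "(B + 2 * \<epsilon> * S k) * C"] elim(2)
    show ?case using \<gamma>(1) unfolding a1_def by (simp add: field_simps)
  qed
  moreover have "0 \<le> 2 * C / \<gamma>" using C(1) \<gamma>(1) by simp
  ultimately show ?thesis by blast
qed

lemma mu_sum_le:
  assumes "\<delta> > 0" and \<delta>: "\<forall>c. (\<Sum>j\<in>{1..p}. \<bar>c j\<bar>) = 1 \<longrightarrow> (\<exists>e\<in>E. (\<Sum>j\<in>{1..p}. c j *\<^sub>R dh j xstar) \<bullet> e \<le> - \<delta>)"
    and G: "\<forall>e\<in>E. \<forall>l\<in>{1..m}. dg l xstar \<bullet> e \<le> G" and V: "\<forall>e\<in>E. V k \<bullet> e \<ge> - R"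
    and "0 \<le> G" "0 \<le> R"
  shows "\<delta> * (\<Sum>j\<in>{1..p}. muk j k) \<le> G * (\<Sum>l\<in>{1..m}. lamk l k) + R"
proof (cases "(\<Sum>j\<in>{1..p}. muk j k) = 0")
  case True
  then show ?thesis using assms(5,6) lamk_nonneg by (simp add: sum_nonneg)
next
  case False
  define M where "M = (\<Sum>j\<in>{1..p}. muk j k)"
  have "M > 0" using False muk_nonneg unfolding M_def by (simp add: sum_nonneg order_le_neq_trans)
  define c where "c j = sgn (h j (xs k)) * muk j k / M" for j
  have "\<bar>sgn (h j (xs k)) * muk j k\<bar> = muk j k" for j
    using muk_nonneg[of j k] params(3) by (cases "h j (xs k) = 0") (auto simp: abs_mult abs_sgn_eq mu_def)
  then have "(\<Sum>j\<in>{1..p}. \<bar>c j\<bar>) = 1" using \<open>M > 0\<close> unfolding c_def M_def by (simp add: sum_divide_distrib[symmetric])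
  then obtain e where e: "e \<in> E" "(\<Sum>j\<in>{1..p}. c j *\<^sub>R dh j xstar) \<bullet> e \<le> - \<delta>" using \<delta> by blast
  have "- R \<le> V k \<bullet> e" using V e(1) by blast
  also have "\<dots> = (\<Sum>l\<in>{1..m}. lamk l k * (dg l xstar \<bullet> e)) + M * ((\<Sum>j\<in>{1..p}. c j *\<^sub>R dh j xstar) \<bullet> e)"
    unfolding inner_V c_def using \<open>M > 0\<close> by (simp add: inner_sum_left sum_distrib_left)
  also have "\<dots> \<le> (\<Sum>l\<in>{1..m}. lamk l k * G) + M * (- \<delta>)"
    using G e \<open>M > 0\<close> lamk_nonneg by (intro add_mono sum_mono mult_left_mono) auto
  also have "\<dots> = G * (\<Sum>l\<in>{1..m}. lamk l k) - \<delta> * M" by (simp add: sum_distrib_left mult.commute)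
  finally show ?thesis unfolding M_def by simp
qed


lemma eventually_inner_V_lower_bound_E:
  "\<exists>C\<ge>0. \<forall>\<epsilon>>0. eventually (\<lambda>k. \<forall>e\<in>E. V k \<bullet> e \<ge> - ((B + 2 * \<epsilon> * S k) * C)) FK"
proof -
  have "\<forall>e\<in>E. \<exists>C\<ge>0. \<forall>\<epsilon>>0. eventually (\<lambda>k. V k \<bullet> e \<ge> - (B + 2 * \<epsilon> * S k) * C) FK"
    using eventually_inner_V_lower_bound unfolding E_def by blast
  then have "\<exists>Ce. \<forall>e\<in>E. Ce e \<ge> 0 \<and> (\<forall>\<epsilon>>0. eventually (\<lambda>k. V k \<bullet> e \<ge> - (B + 2 * \<epsilon> * S k) * Ce e) FK)"
    by (rule bchoice)
  then obtain Ce where Ce: "\<forall>e\<in>E. Ce e \<ge> 0 \<and> (\<forall>\<epsilon>>0. eventually (\<lambda>k. V k \<bullet> e \<ge> - (B + 2 * \<epsilon> * S k) * Ce e) FK)"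
    by blast
  have CE: "(\<Sum>e\<in>E. Ce e) \<ge> 0" "\<forall>e\<in>E. Ce e \<le> (\<Sum>e\<in>E. Ce e)"
    using Ce finite_E by (auto intro: sum_nonneg member_le_sum)
  have "eventually (\<lambda>k. \<forall>e\<in>E. V k \<bullet> e \<ge> - ((B + 2 * \<epsilon> * S k) * (\<Sum>e\<in>E. Ce e))) FK" if "\<epsilon> > 0" for \<epsilon>
  proof -
    have "eventually (\<lambda>k. \<forall>e\<in>E. V k \<bullet> e \<ge> - (B + 2 * \<epsilon> * S k) * Ce e) FK"
      using Ce finite_E that by (intro eventually_ball_finite) auto
    then show ?thesis
    proof eventually_elim
      case (elim k)
      have R: "B + 2 * \<epsilon> * S k \<ge> 0" using B_nonneg S_ge_1[of k] that by simp
      show ?case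
      proof
        fix e assume "e \<in> E"
        then have "(B + 2 * \<epsilon> * S k) * Ce e \<le> (B + 2 * \<epsilon> * S k) * (\<Sum>e\<in>E. Ce e)"
          using CE(2) R by (intro mult_left_mono) auto
        moreover have "- (B + 2 * \<epsilon> * S k) * Ce e \<le> V k \<bullet> e" using elim \<open>e \<in> E\<close> by blast
        ultimately show "V k \<bullet> e \<ge> - ((B + 2 * \<epsilon> * S k) * (\<Sum>e\<in>E. Ce e))" by (simp only: minus_mult_left)
      qed
    qed
  qed
  then show ?thesis using CE(1) by blast
qed

lemma mu_sum_bound:
  "\<exists>a2 b2 c2. 0 \<le> b2 \<and> 0 \<le> c2 \<and> (\<forall>\<epsilon>>0. eventually (\<lambda>k.
      (\<Sum>j\<in>{1..p}. muk j k) \<le> a2 + b2 * (\<epsilon> * S k) + c2 * (\<Sum>l\<in>{1..m}. lamk l k)) FK)"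
proof -
  have "\<not> (\<exists>c :: nat \<Rightarrow> real. (\<exists>i\<in>{1..p}. c i \<noteq> 0) \<and> (\<forall>d\<in>Tstar. (\<Sum>i\<in>{1..p}. c i *\<^sub>R dh i xstar) \<bullet> d \<ge> 0))"
    using mfcq unfolding MFCQ_def by blast
  from uniform_negative_generator[OF finite_E Tstar_generated_by_E this]
  obtain \<delta> where \<delta>: "\<delta> > 0"
      "\<forall>c. (\<Sum>j\<in>{1..p}. \<bar>c j\<bar>) = 1 \<longrightarrow> (\<exists>e\<in>E. (\<Sum>j\<in>{1..p}. c j *\<^sub>R dh j xstar) \<bullet> e \<le> - \<delta>)"
    by blast
  obtain CE where CE: "CE \<ge> 0"
      "\<forall>\<epsilon>>0. eventually (\<lambda>k. \<forall>e\<in>E. V k \<bullet> e \<ge> - ((B + 2 * \<epsilon> * S k) * CE)) FK"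
    using eventually_inner_V_lower_bound_E by blast
  define GE where "GE = (\<Sum>e\<in>E. \<Sum>l\<in>{1..m}. \<bar>dg l xstar \<bullet> e\<bar>)"
  have "GE \<ge> 0" unfolding GE_def by (simp add: sum_nonneg)
  have GE: "dg l xstar \<bullet> e \<le> GE" if "e \<in> E" "l \<in> {1..m}" for e l
  proof -
    have "dg l xstar \<bullet> e \<le> (\<Sum>l\<in>{1..m}. \<bar>dg l xstar \<bullet> e\<bar>)"
      using member_le_sum[of l "{1..m}" "\<lambda>l. \<bar>dg l xstar \<bullet> e\<bar>"] that(2) by simp
    also have "\<dots> \<le> GE" unfolding GE_def using that(1) finite_E by (intro member_le_sum) (auto intro: sum_nonneg)
    finally show ?thesis .
  qed
  have "eventually (\<lambda>k. (\<Sum>j\<in>{1..p}. muk j k)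
      \<le> B * CE / \<delta> + 2 * CE / \<delta> * (\<epsilon> * S k) + GE / \<delta> * (\<Sum>l\<in>{1..m}. lamk l k)) FK" if "\<epsilon> > 0" for \<epsilon>
    using CE(2)[rule_format, OF that]
  proof eventually_elim
    case (elim k)
    have "(B + 2 * \<epsilon> * S k) * CE \<ge> 0" using B_nonneg S_ge_1[of k] that CE(1) by simp
    then have "\<delta> * (\<Sum>j\<in>{1..p}. muk j k) \<le> GE * (\<Sum>l\<in>{1..m}. lamk l k) + (B + 2 * \<epsilon> * S k) * CE"
      using mu_sum_le[OF \<delta>] GE elim \<open>GE \<ge> 0\<close> by blast
    then show ?case using \<delta>(1) by (simp add: field_simps)
  qed
  moreover have "0 \<le> 2 * CE / \<delta>" "0 \<le> GE / \<delta>" using CE(1) \<open>GE \<ge> 0\<close> \<delta>(1) by simp_all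
  ultimately show ?thesis by blast
qed

lemma S_eventually_bounded: "\<exists>M. eventually (\<lambda>k. S k \<le> M) FK"
proof -
  obtain a1 b1 where ab1: "0 \<le> b1" "\<forall>\<epsilon>>0. eventually (\<lambda>k. (\<Sum>l\<in>{1..m}. lamk l k) \<le> a1 + b1 * (\<epsilon> * S k)) FK"
    using lam_sum_bound by blast
  obtain a2 b2 c2 where abc2: "0 \<le> b2" "0 \<le> c2" "\<forall>\<epsilon>>0. eventually (\<lambda>k.
      (\<Sum>j\<in>{1..p}. muk j k) \<le> a2 + b2 * (\<epsilon> * S k) + c2 * (\<Sum>l\<in>{1..m}. lamk l k)) FK"
    using mu_sum_bound by blast
  define \<epsilon> where "\<epsilon> = 1 / (2 * ((1 + c2) * b1 + b2) + 2)"
  have "(1 + c2) * b1 + b2 \<ge> 0" using ab1 abc2 by simp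
  then have \<epsilon>: "\<epsilon> > 0" "\<epsilon> * ((1 + c2) * b1 + b2) \<le> 1/2" unfolding \<epsilon>_def by (simp_all add: field_simps)
  from ab1(2)[rule_format, OF \<epsilon>(1)] abc2(3)[rule_format, OF \<epsilon>(1)]
  have "eventually (\<lambda>k. S k \<le> 2 * (1 + a2 + (1 + c2) * a1)) FK"
  proof eventually_elim
    case (elim k)
    show ?case
      using self_bounding_le[OF _ elim _ ab1(1) abc2(2) \<epsilon>(2)] lamk_nonneg S_ge_1[of k]
      unfolding S_def by (simp add: sum_nonneg)
  qed
  then show ?thesis by blast
qed

lemma multipliers_bounded:
  "(\<forall>l\<in>{1..m}. bounded ((\<lambda>k. lamk l k) ` K)) \<and> (\<forall>j\<in>{1..p}. bounded ((\<lambda>k. muk j k) ` K))"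
proof -
  obtain M where M: "eventually (\<lambda>k. S k \<le> M) FK" using S_eventually_bounded by blast
  have sums: "0 \<le> (\<Sum>l\<in>{1..m}. lamk l k)" "0 \<le> (\<Sum>j\<in>{1..p}. muk j k)" for k
    using lamk_nonneg muk_nonneg by (simp_all add: sum_nonneg)
  have "eventually (\<lambda>k. \<bar>lamk l k\<bar> \<le> M) FK" if "l \<in> {1..m}" for l
    using M
  proof eventually_elim
    case (elim k)
    have "lamk l k \<le> (\<Sum>l\<in>{1..m}. lamk l k)" using that lamk_nonneg by (intro member_le_sum) auto
    then show ?case using elim lamk_nonneg[of l k] sums[of k] unfolding S_def by simp
  qed
  moreover have "eventually (\<lambda>k. \<bar>muk j k\<bar> \<le> M) FK" if "j \<in> {1..p}" for j
    using M
  proof eventually_elim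
    case (elim k)
    have "muk j k \<le> (\<Sum>j\<in>{1..p}. muk j k)" using that muk_nonneg by (intro member_le_sum) auto
    then show ?case using elim muk_nonneg[of j k] sums[of k] unfolding S_def by simp
  qed
  ultimately show ?thesis by (blast intro: bounded_image_if_eventually_abs_le)
qed

end

theorem theoremB2:
  fixes f :: "'a::euclidean_space \<Rightarrow> real"
    and g h :: "nat \<Rightarrow> 'a \<Rightarrow> real"
    and df :: "'a \<Rightarrow> 'a" and dg dh :: "nat \<Rightarrow> 'a \<Rightarrow> 'a"
    and a :: "nat \<Rightarrow> 'a" and b :: "nat \<Rightarrow> real" and q m p :: nat
    and U :: "'a set" and x0 :: 'a
    and \<alpha>0 \<rho>0 \<nu> \<theta>\<alpha> \<theta>\<rho> \<phi> \<beta> :: real and \<xi> :: "real \<Rightarrow> real"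
    and D :: "nat \<Rightarrow> 'a set" and xs :: "nat \<Rightarrow> 'a" and \<alpha> \<rho> :: "nat \<Rightarrow> real"
    and K :: "nat set" and xstar :: 'a
  assumes U: "open U" "polyX a b q \<subseteq> U"
    and f_C1: "C1_grad U f df"
    and g_C1: "\<forall>l\<in>{1..m}. C1_grad U (g l) (dg l)"
    and h_C1: "\<forall>j\<in>{1..p}. C1_grad U (h j) (dh j)"
    and params: "\<alpha>0 > 0" "\<rho>0 > 0" "1 < \<nu>" "\<nu> \<le> 2" "0 < \<theta>\<alpha>" "\<theta>\<alpha> < 1"
       "0 < \<theta>\<rho>" "\<theta>\<rho> < 1" "\<phi> \<ge> 1" "\<beta> > 1"
    and forcing: "forcing \<xi>"
    and Glog_ne: "Glog g m x0 \<noteq> {}"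
    and compact: "compact (polyX a b q \<inter> Omega_log g m x0)"
    and x0: "x0 \<in> polyX a b q" "\<forall>l\<in>Glog g m x0. g l x0 < 0"
    and finD: "\<forall>k. finite (D k)"
    and poll: "poll_dir_assumption a b q D xs"
    and run: "logds_run f g h m p (polyX a b q) x0 \<alpha>0 \<rho>0 \<nu> \<theta>\<alpha> \<theta>\<rho> \<phi> \<beta> \<xi> D xs \<alpha> \<rho>"
    and K_sub: "K \<subseteq> {k. \<rho> (Suc k) < \<rho> k}"
    and K_inf: "infinite K"
    and conv: "filterlim xs (nhds xstar) (inf sequentially (principal K))"
    and mfcq: "MFCQ a b q g dg dh m p xstar"
  shows "(\<forall>l\<in>{1..m}. bounded ((\<lambda>k. lam g m x0 \<nu> l (xs k) (\<rho> k)) ` K))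
       \<and> (\<forall>j\<in>{1..p}. bounded ((\<lambda>k. mu h \<nu> j (xs k) (\<rho> k)) ` K))"
proof -
  interpret logds_limit f g h df dg dh a b q m p U x0 \<alpha>0 \<rho>0 \<nu> \<theta>\<alpha> \<theta>\<rho> \<phi> \<beta> \<xi> D xs \<alpha> \<rho> K xstar
    by unfold_locales (fact assms)+
  show ?thesis by (rule multipliers_bounded)
qed

end
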